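(* Let $f$ be continuous on $Q=[a_1,b_1]\times\dots\times[a_n,b_n]$. For $x=(x^1,\dots,x^n)\in Q$ write $\tilde x^i=(x^1,\dots,x^{i-1},x^{i+1},\dots,x^n)$. Let $f_i[\tilde x^i]$ be the function $x^i\mapsto f(x^1,\dots,x^n)$ on $[a_i,b_i]$ with the other coordinates fixed. Let $H_1,\dots,H_n\in(0,1]$. (1) Suppose there are constants $c_i>0$ such that for all $i$, all $\tilde x^i$, all $x^i\in[a_i,b_i]$ and all sufficiently small $\delta>0$ one has $\mathrm{osc}_\delta(x^i)(f_i[\tilde x^i])\le c_i\delta^{H_i}$. Then the upper box-counting dimension of the graph of $f$ (a subset of $\mathbb R^{n+1}$) is at most $n+1-\min\{H_1,\dots,H_n\}$. (2) Suppose that for each $i$ there is a dense subset $A_i$ of $\prod_{j\ne i}[a_j,b_j]$ and a constant $c_i>0$ such that $\mathrm{Var}_\delta(f_i[\tilde x^i])\ge c_i\delta^{H_i}$ for all $\tilde x^i\in A_i$ and all sufficiently small $\delta>0$. Then the lower box-counting dimension of the graph of $f$ is at least $n+1-\min\{H_1,\dots,H_n\}$. (3) If the hypotheses of both (1) and (2) hold, then the box-counting dimension of the graph of $f$ exists and equals $n+1-\min\{H_1,\dots,H_n\}=n-1+\max\{s_1,\dots,s_n\}$, where $s_i=\sup_{\tilde x^i}\dim_B\mathrm{graph} f_i[\tilde x^i]$.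
   Context: For a continuous $g:[a,b]\to\mathbb R$ and $\delta>0$, the $\delta$-oscillation of $g$ at $x$ is $\mathrm{osc}_\delta(x)(g)=\sup\{|g(y)-g(z)|:y,z\in[a,b]\cap[x-\delta,x+\delta]\}$. The $\delta$-variation is $\mathrm{Var}_\delta(g)=\int_a^b\mathrm{osc}_\delta(x)(g)\,dx$. For a bounded $A\subset\mathbb R^d$, $N(\delta)$ is the number of cubes of the $\delta$-grid (products of intervals $[m_j\delta,(m_j+1)\delta]$, $m_j\in\mathbb Z$) meeting $A$. Upper and lower box-counting dimensions are $\limsup$ and $\liminf$ as $\delta\to0$ of $\ln N(\delta)/\ln(1/\delta)$, and $\dim_B$ denotes their common value when they agree. *)

theory Defs
  imports "HOL-Analysis.Analysis"
begin

definition osc :: "real \<Rightarrow> real \<Rightarrow> real \<Rightarrow> real \<Rightarrow> (real \<Rightarrow> real) \<Rightarrow> real" where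
  "osc a b \<delta> x g = Sup {\<bar>g y - g z\<bar> | y z.
      y \<in> {a..b} \<inter> {x - \<delta>..x + \<delta>} \<and> z \<in> {a..b} \<inter> {x - \<delta>..x + \<delta>}}"

definition Var :: "real \<Rightarrow> real \<Rightarrow> real \<Rightarrow> (real \<Rightarrow> real) \<Rightarrow> real" where
  "Var a b \<delta> g = integral {a..b} (\<lambda>x. osc a b \<delta> x g)"

definition grid_count :: "real \<Rightarrow> 'a::euclidean_space set \<Rightarrow> nat" where
  "grid_count \<delta> A = card {m \<in> Basis \<rightarrow>\<^sub>E (UNIV :: int set).
      \<exists>p\<in>A. \<forall>e\<in>Basis. of_int (m e) * \<delta> \<le> p \<bullet> e \<and> p \<bullet> e \<le> (of_int (m e) + 1) * \<delta>}"

definition upper_box_dim :: "'a::euclidean_space set \<Rightarrow> ereal" where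
  "upper_box_dim A = Limsup (at_right 0)
      (\<lambda>\<delta>. ereal (ln (real (grid_count \<delta> A)) / ln (1 / \<delta>)))"

definition lower_box_dim :: "'a::euclidean_space set \<Rightarrow> ereal" where
  "lower_box_dim A = Liminf (at_right 0)
      (\<lambda>\<delta>. ereal (ln (real (grid_count \<delta> A)) / ln (1 / \<delta>)))"

definition has_box_dim :: "'a::euclidean_space set \<Rightarrow> real \<Rightarrow> bool" where
  "has_box_dim A d \<longleftrightarrow>
     ((\<lambda>\<delta>. ln (real (grid_count \<delta> A)) / ln (1 / \<delta>)) \<longlongrightarrow> d) (at_right 0)"

definition setcoord :: "real^'n \<Rightarrow> 'n \<Rightarrow> real \<Rightarrow> real^'n" where
  "setcoord x i t = (\<chi> j. if j = i then t else x $ j)"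

text \<open>f_i[x~^i]: the section t \<mapsto> f(x^1,..,t,..,x^n); x^i itself is ignored\<close>
definition fsec :: "(real^'n \<Rightarrow> real) \<Rightarrow> real^'n \<Rightarrow> 'n \<Rightarrow> real \<Rightarrow> real" where
  "fsec f x i = (\<lambda>t. f (setcoord x i t))"

definition graph1 :: "real \<Rightarrow> real \<Rightarrow> (real \<Rightarrow> real) \<Rightarrow> (real \<times> real) set" where
  "graph1 a b g = (\<lambda>t. (t, g t)) ` {a..b}"

definition graphn :: "(real^'n) set \<Rightarrow> (real^'n \<Rightarrow> real) \<Rightarrow> ((real^'n) \<times> real) set" where
  "graphn Q f = (\<lambda>x. (x, f x)) ` Q"

definition osc_hyp :: "real^'n \<Rightarrow> real^'n \<Rightarrow> (real^'n \<Rightarrow> real) \<Rightarrow> ('n \<Rightarrow> real) \<Rightarrow> bool" where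
  "osc_hyp a b f H \<longleftrightarrow> (\<exists>c. (\<forall>i. c i > 0) \<and> (\<exists>\<delta>0>0. \<forall>\<delta>. 0 < \<delta> \<and> \<delta> < \<delta>0 \<longrightarrow>
      (\<forall>i. \<forall>x\<in>cbox a b. \<forall>t\<in>{a$i..b$i}.
         osc (a$i) (b$i) \<delta> t (fsec f x i) \<le> c i * \<delta> powr H i)))"

text \<open>Hypothesis (2): lower bound of the delta-variation on a dense set of sections.
  The slice prod_{j<>i}[a_j,b_j] is identified with the face {x in Q. x_i = a_i}.\<close>
definition var_hyp :: "real^'n \<Rightarrow> real^'n \<Rightarrow> (real^'n \<Rightarrow> real) \<Rightarrow> ('n \<Rightarrow> real) \<Rightarrow> bool" where
  "var_hyp a b f H \<longleftrightarrow> (\<exists>A c. \<forall>i. c i > 0 \<and>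
      A i \<subseteq> {x \<in> cbox a b. x$i = a$i} \<and> {x \<in> cbox a b. x$i = a$i} \<subseteq> closure (A i) \<and>
      (\<exists>\<delta>0>0. \<forall>\<delta>. 0 < \<delta> \<and> \<delta> < \<delta>0 \<longrightarrow>
         (\<forall>x\<in>A i. Var (a$i) (b$i) \<delta> (fsec f x i) \<ge> c i * \<delta> powr H i)))"

end

(*
  Count the cubes of the delta-grid that meet the graph column by column: above each
  delta-cell m of the base the cubes are indexed by the levels j hit by f on that cell.

  Upper bound: changing one coordinate at a time, f varies by at most n C delta^h on a
  cell (C >= all c_i, h = min H_i), so each of the O(delta^-n) columns contains
  O(delta^(h-1)) cubes.

  Lower bound, in a direction i with H_i = h: the delta-variation of a section is at most
  3 delta times the sum of its oscillations over the delta-intervals, and by the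
  intermediate value theorem each of these oscillations is at most delta times the number
  of cubes in the corresponding column.  By density, a section with large variation passes
  through each of the ~delta^-(n-1) cells of the face, giving N(delta) >= c' delta^(h-1-n).

  For n = 1 the same bounds give dim_B graph f_i = 2 - H_i for the sections through the
  dense set and an upper bound 2 - H_i for all sections, which identifies s_i.
*)

theory Submission
  imports Defs "HOL-Real_Asymp.Real_Asymp"
begin

section \<open>Grid cells of a graph\<close>

definition grid_ivl :: "real \<Rightarrow> int \<Rightarrow> real set" where
  "grid_ivl \<delta> k = {of_int k * \<delta> .. (of_int k + 1) * \<delta>}"

definition grid_levels :: "real \<Rightarrow> ('a \<Rightarrow> real) \<Rightarrow> 'a set \<Rightarrow> int set" where
  "grid_levels \<delta> f S = {j. \<exists>x\<in>S. f x \<in> grid_ivl \<delta> j}"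

definition grid_cell :: "real \<Rightarrow> ('a::euclidean_space \<Rightarrow> int) \<Rightarrow> 'a set" where
  "grid_cell \<delta> m = {x. \<forall>e\<in>Basis. x \<bullet> e \<in> grid_ivl \<delta> (m e)}"

definition graph :: "'a set \<Rightarrow> ('a \<Rightarrow> real) \<Rightarrow> ('a \<times> real) set" where
  "graph S f = (\<lambda>x. (x, f x)) ` S"

(* (m, j) stands for the grid cube with base cell grid_cell \<delta> m and vertical interval grid_ivl \<delta> j. *)
definition graph_cells :: "real \<Rightarrow> 'a::euclidean_space set \<Rightarrow> ('a \<Rightarrow> real) \<Rightarrow> (('a \<Rightarrow> int) \<times> int) set"
  where "graph_cells \<delta> S f = Sigma (Basis \<rightarrow>\<^sub>E UNIV) (\<lambda>m. grid_levels \<delta> f (S \<inter> grid_cell \<delta> m))"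

lemma mem_grid_ivl_floor: "0 < \<delta> \<Longrightarrow> y \<in> grid_ivl \<delta> \<lfloor>y / \<delta>\<rfloor>"
  unfolding grid_ivl_def
  by (metis atLeastAtMost_iff floor_divide_lower floor_divide_upper less_eq_real_def)

lemma abs_diff_le_grid_ivl: "u \<in> grid_ivl \<delta> k \<Longrightarrow> v \<in> grid_ivl \<delta> k \<Longrightarrow> \<bar>u - v\<bar> \<le> \<delta>"
  by (auto simp: grid_ivl_def abs_le_iff algebra_simps)

lemma grid_ivl_index_bounds:
  assumes "0 < \<delta>" "y \<in> grid_ivl \<delta> k" "lo \<le> y" "y \<le> hi"
  shows "k \<in> {\<lceil>lo / \<delta>\<rceil> - 1 .. \<lfloor>hi / \<delta>\<rfloor>}"
proof -
  have "of_int k * \<delta> \<le> hi" "lo \<le> of_int (k + 1) * \<delta>"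
    using assms by (auto simp: grid_ivl_def)
  then have "of_int k \<le> hi / \<delta>" "lo / \<delta> \<le> of_int (k + 1)"
    using assms(1) by (simp_all add: pos_le_divide_eq pos_divide_le_eq)
  then have "k \<le> \<lfloor>hi / \<delta>\<rfloor>" "\<lceil>lo / \<delta>\<rceil> \<le> k + 1"
    by (simp_all add: le_floor_iff ceiling_le_iff)
  then show ?thesis
    by simp
qed

lemma card_grid_index_range:
  assumes "0 < \<delta>" "lo \<le> hi"
  shows "real (card {\<lceil>lo / \<delta>\<rceil> - 1 .. \<lfloor>hi / \<delta>\<rfloor>}) \<le> (hi - lo) / \<delta> + 2"
proof -
  define z where "z = \<lfloor>hi / \<delta>\<rfloor> - \<lceil>lo / \<delta>\<rceil> + 2"
  have "real_of_int \<lfloor>hi / \<delta>\<rfloor> \<le> hi / \<delta>" "lo / \<delta> \<le> real_of_int \<lceil>lo / \<delta>\<rceil>"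
    by linarith+
  moreover have "(hi - lo) / \<delta> = hi / \<delta> - lo / \<delta>"
    by (simp add: diff_divide_distrib)
  moreover have "real_of_int z = real_of_int \<lfloor>hi / \<delta>\<rfloor> - real_of_int \<lceil>lo / \<delta>\<rceil> + 2"
    by (simp add: z_def)
  ultimately have "real_of_int z \<le> (hi - lo) / \<delta> + 2"
    by linarith
  moreover have "0 \<le> (hi - lo) / \<delta> + 2"
    using assms by simp
  ultimately show ?thesis
    by (cases "0 \<le> z") (auto simp: z_def)
qed

lemma grid_levels_subset:
  assumes "0 < \<delta>" "\<And>x. x \<in> S \<Longrightarrow> lo \<le> f x \<and> f x \<le> hi"
  shows "grid_levels \<delta> f S \<subseteq> {\<lceil>lo / \<delta>\<rceil> - 1 .. \<lfloor>hi / \<delta>\<rfloor>}"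
proof
  fix j assume "j \<in> grid_levels \<delta> f S"
  then obtain x where "x \<in> S" "f x \<in> grid_ivl \<delta> j"
    by (auto simp: grid_levels_def)
  then show "j \<in> {\<lceil>lo / \<delta>\<rceil> - 1 .. \<lfloor>hi / \<delta>\<rfloor>}"
    using grid_ivl_index_bounds assms by blast
qed

lemma finite_grid_levels:
  assumes "0 < \<delta>" "\<And>x. x \<in> S \<Longrightarrow> lo \<le> f x \<and> f x \<le> hi"
  shows "finite (grid_levels \<delta> f S)"
  by (rule finite_subset[OF _ finite_atLeastAtMost_int], rule grid_levels_subset) (use assms in auto)

lemma card_grid_levels_le:
  assumes "0 < \<delta>" "lo \<le> hi" "\<And>x. x \<in> S \<Longrightarrow> lo \<le> f x \<and> f x \<le> hi"
  shows "real (card (grid_levels \<delta> f S)) \<le> (hi - lo) / \<delta> + 2"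
proof -
  have "card (grid_levels \<delta> f S) \<le> card {\<lceil>lo / \<delta>\<rceil> - 1 .. \<lfloor>hi / \<delta>\<rfloor>}"
    by (intro card_mono finite_atLeastAtMost_int grid_levels_subset assms)
  then show ?thesis
    using card_grid_index_range[OF assms(1,2)] by linarith
qed

lemma Basis_prod_real:
  "(Basis :: ('a::euclidean_space \<times> real) set) = insert (0, 1) ((\<lambda>u. (u, 0)) ` Basis)"
  by (auto simp: Basis_prod_def)

lemma grid_count_graph:
  fixes f :: "'a::euclidean_space \<Rightarrow> real"
  shows "grid_count \<delta> (graph S f) = card (graph_cells \<delta> S f)"
proof -
  let ?B = "Basis :: ('a \<times> real) set"
  let ?G = "{M \<in> ?B \<rightarrow>\<^sub>E UNIV. \<exists>x\<in>S. \<forall>v\<in>?B. (x, f x) \<bullet> v \<in> grid_ivl \<delta> (M v)}"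
  define \<Phi> where "\<Phi> M = (restrict (\<lambda>u. M (u, 0)) Basis, M (0, 1))" for M :: "'a \<times> real \<Rightarrow> int"
  define \<Psi> where "\<Psi> = (\<lambda>(m :: 'a \<Rightarrow> int, j :: int). restrict (\<lambda>v. if v = (0, 1) then j else m (fst v)) ?B)"
  have inv: "\<Phi> (\<Psi> p) = p" if "p \<in> graph_cells \<delta> S f" for p
    using that by (auto simp: \<Phi>_def \<Psi>_def graph_cells_def Basis_prod_real PiE_def extensional_def fun_eq_iff)
  have cell_iff: "(\<forall>v\<in>?B. (x, f x) \<bullet> v \<in> grid_ivl \<delta> (M v)) \<longleftrightarrow>
      x \<in> grid_cell \<delta> (fst (\<Phi> M)) \<and> f x \<in> grid_ivl \<delta> (snd (\<Phi> M))" for x M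
    by (auto simp: \<Phi>_def Basis_prod_real grid_cell_def)
  have "grid_count \<delta> (graph S f) = card ?G"
    unfolding grid_count_def graph_def grid_ivl_def by (simp add: Bex_def)
  also have "bij_betw \<Phi> ?G (graph_cells \<delta> S f)"
  proof (rule bij_betw_byWitness[where f' = \<Psi>])
    show "\<forall>M\<in>?G. \<Psi> (\<Phi> M) = M"
      by (auto simp: \<Phi>_def \<Psi>_def Basis_prod_real PiE_def extensional_def fun_eq_iff)
    show "\<forall>p\<in>graph_cells \<delta> S f. \<Phi> (\<Psi> p) = p"
      using inv by blast
    show "\<Phi> ` ?G \<subseteq> graph_cells \<delta> S f"
      using cell_iff by (fastforce simp: \<Phi>_def graph_cells_def grid_levels_def)
    show "\<Psi> ` graph_cells \<delta> S f \<subseteq> ?G"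
    proof (rule image_subsetI)
      fix p assume p: "p \<in> graph_cells \<delta> S f"
      then obtain x where x: "x \<in> S" "x \<in> grid_cell \<delta> (fst p)" "f x \<in> grid_ivl \<delta> (snd p)"
        by (auto simp: graph_cells_def grid_levels_def)
      then have "\<forall>v\<in>?B. (x, f x) \<bullet> v \<in> grid_ivl \<delta> (\<Psi> p v)"
        using cell_iff[of x "\<Psi> p"] inv[OF p] by simp
      moreover have "\<Psi> p \<in> ?B \<rightarrow>\<^sub>E UNIV"
        by (auto simp: \<Psi>_def split: prod.split)
      ultimately show "\<Psi> p \<in> ?G"
        using x(1) by blast
    qed
  qed
  then have "card ?G = card (graph_cells \<delta> S f)" by (rule bij_betw_same_card)
  finally show ?thesis .
qed

section \<open>Oscillation and \<delta>-variation of functions of one variable\<close>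

definition osc_on :: "(real \<Rightarrow> real) \<Rightarrow> real set \<Rightarrow> real" where
  "osc_on g S = Sup {\<bar>g y - g z\<bar> | y z. y \<in> S \<and> z \<in> S}"

lemma osc_eq_osc_on: "osc \<alpha> \<beta> \<delta> t g = osc_on g ({\<alpha>..\<beta>} \<inter> {t - \<delta>..t + \<delta>})"
  by (simp add: osc_def osc_on_def)

lemma osc_on_ge:
  assumes "\<And>x. x \<in> S \<Longrightarrow> \<bar>g x\<bar> \<le> M" "y \<in> S" "z \<in> S"
  shows "\<bar>g y - g z\<bar> \<le> osc_on g S"
  unfolding osc_on_def
proof (rule cSup_upper)
  show "bdd_above {\<bar>g y - g z\<bar> | y z. y \<in> S \<and> z \<in> S}"
  proof (rule bdd_aboveI)
    fix w assume "w \<in> {\<bar>g y - g z\<bar> | y z. y \<in> S \<and> z \<in> S}"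
    then obtain y z where "w = \<bar>g y - g z\<bar>" "y \<in> S" "z \<in> S" by blast
    with assms(1)[of y] assms(1)[of z] show "w \<le> 2 * M" by linarith
  qed
qed (use assms in blast)

lemma osc_on_le:
  assumes "S \<noteq> {}" "\<And>y z. y \<in> S \<Longrightarrow> z \<in> S \<Longrightarrow> \<bar>g y - g z\<bar> \<le> B"
  shows "osc_on g S \<le> B"
  unfolding osc_on_def
proof (rule cSup_least)
  obtain x where "x \<in> S"
    using assms(1) by blast
  then have "\<bar>g x - g x\<bar> \<in> {\<bar>g y - g z\<bar> | y z. y \<in> S \<and> z \<in> S}"
    by blast
  then show "{\<bar>g y - g z\<bar> | y z. y \<in> S \<and> z \<in> S} \<noteq> {}"
    by blast
qed (use assms(2) in blast)

lemma osc_on_nonneg: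
  assumes "\<And>x. x \<in> S \<Longrightarrow> \<bar>g x\<bar> \<le> M" "S \<noteq> {}"
  shows "0 \<le> osc_on g S"
proof -
  obtain x where "x \<in> S"
    using assms(2) by blast
  then show ?thesis
    using osc_on_ge[OF assms(1), where y = x and z = x] by simp
qed

lemma grid_levels_floor_range:
  fixes g :: "real \<Rightarrow> real"
  assumes "connected (g ` S)" "0 < \<delta>" "p \<in> S" "q \<in> S" "g q \<le> g p"
  shows "{\<lfloor>g q / \<delta>\<rfloor> .. \<lfloor>g p / \<delta>\<rfloor>} \<subseteq> grid_levels \<delta> g S"
proof
  fix j assume j: "j \<in> {\<lfloor>g q / \<delta>\<rfloor> .. \<lfloor>g p / \<delta>\<rfloor>}"
  define w where "w = max (g q) (of_int j * \<delta>)"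
  have "of_int j * \<delta> \<le> g p"
    using j assms(2) by (auto simp: le_floor_iff pos_le_divide_eq)
  have "w \<in> g ` S"
    unfolding w_def
    by (rule connectedD_interval[OF assms(1) imageI[OF assms(4)] imageI[OF assms(3)]])
      (use assms(5) \<open>of_int j * \<delta> \<le> g p\<close> in auto)
  moreover have "g q / \<delta> < of_int j + 1"
    using j by (simp add: floor_le_iff)
  then have "g q < (of_int j + 1) * \<delta>"
    using assms(2) by (simp add: pos_divide_less_eq)
  then have "w \<in> grid_ivl \<delta> j"
    using assms(2) by (auto simp: w_def grid_ivl_def)
  ultimately show "j \<in> grid_levels \<delta> g S"
    by (auto simp: grid_levels_def)
qed

lemma abs_diff_le_card_grid_levels:
  fixes g :: "real \<Rightarrow> real"
  assumes "connected (g ` S)" "finite (grid_levels \<delta> g S)" "0 < \<delta>" "y \<in> S" "z \<in> S"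
  shows "\<bar>g y - g z\<bar> \<le> \<delta> * card (grid_levels \<delta> g S)"
proof -
  have *: "g p - g q \<le> \<delta> * card (grid_levels \<delta> g S)" if "p \<in> S" "q \<in> S" "g q \<le> g p" for p q
  proof -
    have floors: "\<lfloor>g q / \<delta>\<rfloor> \<le> \<lfloor>g p / \<delta>\<rfloor>"
      using that assms(3) by (intro floor_mono divide_right_mono) auto
    have "g p / \<delta> < of_int \<lfloor>g p / \<delta>\<rfloor> + 1" "of_int \<lfloor>g q / \<delta>\<rfloor> \<le> g q / \<delta>"
      by linarith+
    then have "(g p - g q) / \<delta> \<le> of_int (\<lfloor>g p / \<delta>\<rfloor> - \<lfloor>g q / \<delta>\<rfloor> + 1)"
      unfolding diff_divide_distrib by simp linarith
    also have "\<dots> = card {\<lfloor>g q / \<delta>\<rfloor> .. \<lfloor>g p / \<delta>\<rfloor>}"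
      using floors by simp
    also have "\<dots> \<le> card (grid_levels \<delta> g S)"
      using card_mono[OF assms(2) grid_levels_floor_range[OF assms(1,3) that]] by simp
    finally show ?thesis
      using assms(3) by (simp add: pos_divide_le_eq mult.commute)
  qed
  show ?thesis
  proof (cases "g z \<le> g y")
    case True
    then show ?thesis
      using *[OF assms(4,5)] unfolding abs_le_iff by linarith
  next
    case False
    then show ?thesis
      using *[OF assms(5,4)] unfolding abs_le_iff by linarith
  qed
qed

lemma abs_diff_le_sum_osc_on_grid:
  fixes g :: "real \<Rightarrow> real"
  assumes M: "\<And>x. x \<in> {\<alpha>..\<beta>} \<Longrightarrow> \<bar>g x\<bar> \<le> M"
    and "k1 \<le> k2" "u \<in> {\<alpha>..\<beta>} \<inter> grid_ivl \<delta> k1" "v \<in> {\<alpha>..\<beta>} \<inter> grid_ivl \<delta> k2"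
  shows "\<bar>g v - g u\<bar> \<le> (\<Sum>k=k1..k2. osc_on g ({\<alpha>..\<beta>} \<inter> grid_ivl \<delta> k))"
  using assms(2,4)
proof (induction k2 arbitrary: v rule: int_ge_induct)
  case base
  show ?case
    by (simp, rule osc_on_ge) (use M base assms(3) in auto)
next
  case (step i)
  define p where "p = of_int (i + 1) * \<delta>"
  have "0 \<le> \<delta>"
    using assms(3) by (auto simp: grid_ivl_def algebra_simps)
  have "u \<le> (of_int k1 + 1) * \<delta>"
    using assms(3) by (simp add: grid_ivl_def)
  also have "\<dots> \<le> p"
    unfolding p_def using step.hyps \<open>0 \<le> \<delta>\<close> by (intro mult_right_mono) auto
  finally have "p \<in> {\<alpha>..\<beta>} \<inter> grid_ivl \<delta> i" "p \<in> {\<alpha>..\<beta>} \<inter> grid_ivl \<delta> (i + 1)"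
    using assms(3) step.prems \<open>0 \<le> \<delta>\<close> by (auto simp: p_def grid_ivl_def algebra_simps)
  then have "\<bar>g v - g p\<bar> \<le> osc_on g ({\<alpha>..\<beta>} \<inter> grid_ivl \<delta> (i + 1))"
    "\<bar>g p - g u\<bar> \<le> (\<Sum>k=k1..i. osc_on g ({\<alpha>..\<beta>} \<inter> grid_ivl \<delta> k))"
    using osc_on_ge[OF _ step.prems] M step.IH by auto
  moreover have "{k1..i + 1} = insert (i + 1) {k1..i}"
    using step.hyps by auto
  ultimately show ?case
    by simp
qed

lemma finite_grid_levels_ivl: "0 < \<delta> \<Longrightarrow> finite (grid_levels \<delta> id {\<alpha>..\<beta>})"
  by (rule finite_grid_levels[where lo = \<alpha> and hi = \<beta>]) auto

lemma osc_on_grid_ivl_nonneg: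
  assumes "\<And>x. x \<in> {\<alpha>..\<beta>} \<Longrightarrow> \<bar>g x\<bar> \<le> M" "k \<in> grid_levels \<delta> id {\<alpha>..\<beta>}"
  shows "0 \<le> osc_on g ({\<alpha>..\<beta>} \<inter> grid_ivl \<delta> k)"
  by (rule osc_on_nonneg[where M = M]) (use assms in \<open>auto simp: grid_levels_def\<close>)

(* An interval of radius \<delta> around t meets only the three cells k with (k - 1) \<delta> \<le> t \<le> (k + 2) \<delta>;
   this is the factor 3 in Var_le_sum_osc_on_grid. *)
lemma abs_diff_le_sum_osc_on_grid_window:
  fixes g :: "real \<Rightarrow> real"
  assumes M: "\<And>x. x \<in> {\<alpha>..\<beta>} \<Longrightarrow> \<bar>g x\<bar> \<le> M" and \<delta>: "0 < \<delta>"
    and yz: "y \<in> {\<alpha>..\<beta>}" "z \<in> {\<alpha>..\<beta>}" "y \<le> z" "\<bar>y - t\<bar> \<le> \<delta>" "\<bar>z - t\<bar> \<le> \<delta>"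
  shows "\<bar>g z - g y\<bar> \<le> (\<Sum>k\<in>grid_levels \<delta> id {\<alpha>..\<beta>}.
           if t \<in> {(of_int k - 1) * \<delta> .. (of_int k + 2) * \<delta>} then osc_on g ({\<alpha>..\<beta>} \<inter> grid_ivl \<delta> k) else 0)"
    (is "_ \<le> sum ?\<psi> ?K")
proof -
  define k1 k2 where "k1 = \<lfloor>y / \<delta>\<rfloor>" and "k2 = \<lfloor>z / \<delta>\<rfloor>"
  have y: "y \<in> grid_ivl \<delta> k1" and z: "z \<in> grid_ivl \<delta> k2"
    unfolding k1_def k2_def using mem_grid_ivl_floor[OF \<delta>] by auto
  have "k1 \<le> k2"
    unfolding k1_def k2_def using yz(3) \<delta> by (intro floor_mono divide_right_mono) auto
  have window: "k \<in> ?K \<and> t \<in> {(of_int k - 1) * \<delta> .. (of_int k + 2) * \<delta>}" if k: "k \<in> {k1..k2}" for k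
  proof
    have "of_int k * \<delta> \<le> of_int k2 * \<delta>" "of_int k1 * \<delta> \<le> of_int k * \<delta>"
      using k \<delta> by simp_all
    then have "of_int k * \<delta> \<le> z" "y \<le> (of_int k + 1) * \<delta>"
      using y z by (auto simp: grid_ivl_def algebra_simps)
    then have "max y (of_int k * \<delta>) \<in> {\<alpha>..\<beta>} \<inter> grid_ivl \<delta> k"
      using yz \<delta> by (auto simp: grid_ivl_def)
    then show "k \<in> ?K"
      by (auto simp: grid_levels_def)
    show "t \<in> {(of_int k - 1) * \<delta> .. (of_int k + 2) * \<delta>}"
      using \<open>of_int k * \<delta> \<le> z\<close> \<open>y \<le> (of_int k + 1) * \<delta>\<close> yz(4,5) by (auto simp: algebra_simps abs_le_iff)
  qed
  have "\<bar>g z - g y\<bar> \<le> (\<Sum>k=k1..k2. osc_on g ({\<alpha>..\<beta>} \<inter> grid_ivl \<delta> k))"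
    by (rule abs_diff_le_sum_osc_on_grid[OF M \<open>k1 \<le> k2\<close>]) (use y z yz in auto)
  also have "\<dots> = (\<Sum>k=k1..k2. ?\<psi> k)"
    using window by (intro sum.cong) auto
  also have "\<dots> \<le> sum ?\<psi> ?K"
    using window finite_grid_levels_ivl[OF \<delta>] osc_on_grid_ivl_nonneg[OF M]
    by (intro sum_mono2) auto
  finally show ?thesis .
qed

lemma osc_le_sum_osc_on_grid_window:
  fixes g :: "real \<Rightarrow> real"
  assumes M: "\<And>x. x \<in> {\<alpha>..\<beta>} \<Longrightarrow> \<bar>g x\<bar> \<le> M" and \<delta>: "0 < \<delta>" and t: "t \<in> {\<alpha>..\<beta>}"
  shows "osc \<alpha> \<beta> \<delta> t g \<le> (\<Sum>k\<in>grid_levels \<delta> id {\<alpha>..\<beta>}.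
           if t \<in> {(of_int k - 1) * \<delta> .. (of_int k + 2) * \<delta>} then osc_on g ({\<alpha>..\<beta>} \<inter> grid_ivl \<delta> k) else 0)"
  unfolding osc_eq_osc_on
proof (rule osc_on_le)
  show "{\<alpha>..\<beta>} \<inter> {t - \<delta>..t + \<delta>} \<noteq> {}"
    using t \<delta> by auto
  fix y z assume "y \<in> {\<alpha>..\<beta>} \<inter> {t - \<delta>..t + \<delta>}" "z \<in> {\<alpha>..\<beta>} \<inter> {t - \<delta>..t + \<delta>}"
  then have "y \<in> {\<alpha>..\<beta>}" "z \<in> {\<alpha>..\<beta>}" "\<bar>y - t\<bar> \<le> \<delta>" "\<bar>z - t\<bar> \<le> \<delta>"
    by (auto simp: abs_le_iff)
  then show "\<bar>g y - g z\<bar> \<le> (\<Sum>k\<in>grid_levels \<delta> id {\<alpha>..\<beta>}.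
      if t \<in> {(of_int k - 1) * \<delta> .. (of_int k + 2) * \<delta>} then osc_on g ({\<alpha>..\<beta>} \<inter> grid_ivl \<delta> k) else 0)"
    using abs_diff_le_sum_osc_on_grid_window[OF M \<delta>, where y = y and z = z]
      abs_diff_le_sum_osc_on_grid_window[OF M \<delta>, where y = z and z = y]
    by (cases "y \<le> z") (auto simp: abs_minus_commute)
qed

lemma integral_window_le:
  fixes c :: real
  assumes "0 \<le> c" "p \<le> q"
  shows "(\<lambda>t. if t \<in> {p..q} then c else 0) integrable_on {\<alpha>..\<beta>}"
    and "integral {\<alpha>..\<beta>} (\<lambda>t. if t \<in> {p..q} then c else 0) \<le> (q - p) * c"
proof -
  have eq: "{p..q} \<inter> {\<alpha>..\<beta>} = {max p \<alpha> .. min q \<beta>}"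
    by auto
  show "(\<lambda>t. if t \<in> {p..q} then c else 0) integrable_on {\<alpha>..\<beta>}"
    unfolding integrable_restrict_Int eq by (rule integrable_const_ivl)
  have "Henstock_Kurzweil_Integration.content {max p \<alpha> .. min q \<beta>} \<le> q - p"
    using assms(2) by (auto simp: content_real_if)
  then show "integral {\<alpha>..\<beta>} (\<lambda>t. if t \<in> {p..q} then c else 0) \<le> (q - p) * c"
    unfolding integral_restrict_Int eq integral_const_real using assms(1) by (simp add: mult_right_mono)
qed

lemma Var_le_sum_osc_on_grid:
  fixes g :: "real \<Rightarrow> real"
  assumes M: "\<And>x. x \<in> {\<alpha>..\<beta>} \<Longrightarrow> \<bar>g x\<bar> \<le> M" and \<delta>: "0 < \<delta>"
  shows "Var \<alpha> \<beta> \<delta> g \<le> 3 * \<delta> * (\<Sum>k\<in>grid_levels \<delta> id {\<alpha>..\<beta>}. osc_on g ({\<alpha>..\<beta>} \<inter> grid_ivl \<delta> k))"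
proof -
  let ?K = "grid_levels \<delta> id {\<alpha>..\<beta>}"
  let ?R = "\<lambda>k. osc_on g ({\<alpha>..\<beta>} \<inter> grid_ivl \<delta> k)"
  let ?w = "\<lambda>k t. if t \<in> {(of_int k - 1) * \<delta> .. (of_int k + 2) * \<delta>} then ?R k else 0"
  have finK: "finite ?K"
    by (rule finite_grid_levels_ivl[OF \<delta>])
  have w: "?w k integrable_on {\<alpha>..\<beta>}" "integral {\<alpha>..\<beta>} (?w k) \<le> 3 * \<delta> * ?R k" if "k \<in> ?K" for k
    using integral_window_le[OF osc_on_grid_ivl_nonneg[OF M that],
          where p = "(of_int k - 1) * \<delta>" and q = "(of_int k + 2) * \<delta>"] \<delta>
    by (auto simp: algebra_simps)
  have int: "(\<lambda>t. \<Sum>k\<in>?K. ?w k t) integrable_on {\<alpha>..\<beta>}"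
    using w(1) by (intro integrable_sum finK) auto
  have "integral {\<alpha>..\<beta>} (\<lambda>t. \<Sum>k\<in>?K. ?w k t) = (\<Sum>k\<in>?K. integral {\<alpha>..\<beta>} (?w k))"
    using w(1) by (intro integral_sum finK) auto
  also have "\<dots> \<le> 3 * \<delta> * sum ?R ?K"
    unfolding sum_distrib_left using w(2) by (intro sum_mono) auto
  finally have int_le: "integral {\<alpha>..\<beta>} (\<lambda>t. \<Sum>k\<in>?K. ?w k t) \<le> 3 * \<delta> * sum ?R ?K" .
  show ?thesis
  proof (cases "(\<lambda>t. osc \<alpha> \<beta> \<delta> t g) integrable_on {\<alpha>..\<beta>}")
    case True
    have "Var \<alpha> \<beta> \<delta> g \<le> integral {\<alpha>..\<beta>} (\<lambda>t. \<Sum>k\<in>?K. ?w k t)"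
      unfolding Var_def
      by (rule integral_le[OF True int]) (rule osc_le_sum_osc_on_grid_window[OF M \<delta>])
    with int_le show ?thesis
      by linarith
  next
    case False
    \<comment> \<open>Var is a Henstock-Kurzweil integral, hence 0 for a non-integrable oscillation.\<close>
    then have "Var \<alpha> \<beta> \<delta> g = 0"
      unfolding Var_def by (rule not_integrable_integral)
    moreover have "0 \<le> sum ?R ?K"
      using osc_on_grid_ivl_nonneg[OF M] by (intro sum_nonneg) auto
    ultimately show ?thesis
      using \<delta> by simp
  qed
qed

section \<open>Counting cells from above\<close>

(* The section of f through x in the direction of the basis vector e, i.e. the paper's f_i[x~^i];
   fsec is its instance on real^'n. *)
definition coord_sec :: "('a::euclidean_space \<Rightarrow> real) \<Rightarrow> 'a \<Rightarrow> 'a \<Rightarrow> real \<Rightarrow> real" where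
  "coord_sec f x e t = f (x + (t - x \<bullet> e) *\<^sub>R e)"

lemma inner_coord_line:
  fixes x :: "'a::euclidean_space"
  assumes "e \<in> Basis" "e' \<in> Basis"
  shows "(x + (t - x \<bullet> e) *\<^sub>R e) \<bullet> e' = (if e' = e then t else x \<bullet> e')"
  using assms by (auto simp: inner_add_left inner_Basis)

lemma coord_line_in_cbox:
  fixes x :: "'a::euclidean_space"
  assumes "e \<in> Basis" "x \<in> cbox a b" "t \<in> {a \<bullet> e..b \<bullet> e}"
  shows "x + (t - x \<bullet> e) *\<^sub>R e \<in> cbox a b"
  using assms unfolding mem_box by (auto simp: inner_coord_line)

lemma continuous_on_coord_sec:
  fixes f :: "'a::euclidean_space \<Rightarrow> real"
  assumes "continuous_on (cbox a b) f" "e \<in> Basis" "x \<in> cbox a b"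
  shows "continuous_on {a \<bullet> e..b \<bullet> e} (coord_sec f x e)"
  unfolding coord_sec_def
  by (rule continuous_on_compose2[OF assms(1)]) (use coord_line_in_cbox[OF assms(2,3)] in \<open>auto intro!: continuous_intros\<close>)

lemma abs_coord_sec_le:
  assumes "\<And>x. x \<in> cbox a b \<Longrightarrow> \<bar>f x\<bar> \<le> M" "e \<in> Basis" "x \<in> cbox a b" "t \<in> {a \<bullet> e..b \<bullet> e}"
  shows "\<bar>coord_sec f x e t\<bar> \<le> M"
  unfolding coord_sec_def using assms coord_line_in_cbox by blast

lemma abs_diff_coord_step_le_osc:
  fixes f :: "'a::euclidean_space \<Rightarrow> real"
  assumes M: "\<And>x. x \<in> cbox a b \<Longrightarrow> \<bar>f x\<bar> \<le> M" and e: "e \<in> Basis" and x: "x \<in> cbox a b"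
    and s: "s \<in> {a \<bullet> e..b \<bullet> e}" "\<bar>s - x \<bullet> e\<bar> \<le> \<delta>"
  shows "\<bar>f (x + (s - x \<bullet> e) *\<^sub>R e) - f x\<bar> \<le> osc (a \<bullet> e) (b \<bullet> e) \<delta> (x \<bullet> e) (coord_sec f x e)"
proof -
  have "\<bar>coord_sec f x e s - coord_sec f x e (x \<bullet> e)\<bar>
      \<le> osc_on (coord_sec f x e) ({a \<bullet> e..b \<bullet> e} \<inter> {x \<bullet> e - \<delta>..x \<bullet> e + \<delta>})"
  proof (rule osc_on_ge)
    show "\<bar>coord_sec f x e t\<bar> \<le> M" if "t \<in> {a \<bullet> e..b \<bullet> e} \<inter> {x \<bullet> e - \<delta>..x \<bullet> e + \<delta>}" for t
      using abs_coord_sec_le[of a b f M e x t] M e x that by blast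
  qed (use x e s in \<open>auto simp: mem_box abs_le_iff\<close>)
  then show ?thesis
    by (simp add: coord_sec_def osc_eq_osc_on)
qed

lemma abs_diff_le_osc_coord_path:
  fixes f :: "'a::euclidean_space \<Rightarrow> real" and D :: real
  assumes M: "\<And>x. x \<in> cbox a b \<Longrightarrow> \<bar>f x\<bar> \<le> M"
    and osc: "\<And>e x t. e \<in> Basis \<Longrightarrow> x \<in> cbox a b \<Longrightarrow> t \<in> {a \<bullet> e..b \<bullet> e} \<Longrightarrow>
        osc (a \<bullet> e) (b \<bullet> e) \<delta> t (coord_sec f x e) \<le> D"
    and p: "p \<in> cbox a b" and q: "q \<in> cbox a b" and pq: "\<And>e. e \<in> Basis \<Longrightarrow> \<bar>p \<bullet> e - q \<bullet> e\<bar> \<le> \<delta>"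
  shows "\<bar>f p - f q\<bar> \<le> real DIM('a) * D"
proof -
  define r where "r S = (\<Sum>e\<in>Basis. (if e \<in> S then p \<bullet> e else q \<bullet> e) *\<^sub>R e)" for S
  have r_inner: "r S \<bullet> e = (if e \<in> S then p \<bullet> e else q \<bullet> e)" if "e \<in> Basis" for S e
    unfolding r_def using that by (rule inner_sum_left_Basis)
  have r_box: "r S \<in> cbox a b" for S
    using p q by (auto simp: mem_box r_inner)
  have "\<bar>f (r S) - f q\<bar> \<le> card S * D" if "finite S" "S \<subseteq> Basis" for S
    using that
  proof (induction S rule: finite_induct)
    case empty
    have "r {} = q"
      unfolding r_def by (simp add: euclidean_representation)
    then show ?case by simp
  next
    case (insert e S)
    then have e: "e \<in> Basis" and S: "S \<subseteq> Basis" and "r S \<bullet> e = q \<bullet> e"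
      by (auto simp: r_inner)
    have "r (insert e S) = r S + (p \<bullet> e - r S \<bullet> e) *\<^sub>R e"
      by (rule euclidean_eqI) (auto simp: inner_coord_line[OF e] r_inner)
    moreover have "p \<bullet> e \<in> {a \<bullet> e..b \<bullet> e}" "q \<bullet> e \<in> {a \<bullet> e..b \<bullet> e}"
      using p q e by (auto simp: mem_box)
    moreover have "\<bar>f (r S + (p \<bullet> e - r S \<bullet> e) *\<^sub>R e) - f (r S)\<bar>
        \<le> osc (a \<bullet> e) (b \<bullet> e) \<delta> (r S \<bullet> e) (coord_sec f (r S) e)"
      using M e r_box \<open>p \<bullet> e \<in> _\<close> pq[OF e] \<open>r S \<bullet> e = q \<bullet> e\<close>
      by (intro abs_diff_coord_step_le_osc) auto
    ultimately have "\<bar>f (r (insert e S)) - f (r S)\<bar> \<le> osc (a \<bullet> e) (b \<bullet> e) \<delta> (q \<bullet> e) (coord_sec f (r S) e)"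
      using \<open>r S \<bullet> e = q \<bullet> e\<close> by simp
    also have "\<dots> \<le> D"
      using osc[OF e r_box] \<open>q \<bullet> e \<in> _\<close> by blast
    finally show ?case
      using insert by (simp add: algebra_simps)
  qed
  moreover have "r Basis = p"
    unfolding r_def by (simp add: euclidean_representation)
  ultimately show ?thesis
    by (metis finite_Basis order_refl)
qed

lemma bounded_on_cbox:
  fixes f :: "'a::euclidean_space \<Rightarrow> real"
  assumes "continuous_on (cbox a b) f"
  obtains M where "\<And>x. x \<in> cbox a b \<Longrightarrow> \<bar>f x\<bar> \<le> M"
  using continuous_on_compact_bound[OF compact_cbox assms] by auto

lemma finite_grid_levels_bounded:
  assumes "0 < \<delta>" "\<And>x. x \<in> S \<Longrightarrow> \<bar>f x\<bar> \<le> M"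
  shows "finite (grid_levels \<delta> f S)"
proof (rule finite_grid_levels[OF assms(1)])
  show "- M \<le> f x \<and> f x \<le> M" if "x \<in> S" for x
    using assms(2)[OF that] by linarith
qed

lemma card_grid_levels_cell_le:
  fixes f :: "'a::euclidean_space \<Rightarrow> real" and D :: real
  assumes M: "\<And>x. x \<in> cbox a b \<Longrightarrow> \<bar>f x\<bar> \<le> M"
    and osc: "\<And>e x t. e \<in> Basis \<Longrightarrow> x \<in> cbox a b \<Longrightarrow> t \<in> {a \<bullet> e..b \<bullet> e} \<Longrightarrow>
        osc (a \<bullet> e) (b \<bullet> e) \<delta> t (coord_sec f x e) \<le> D"
    and \<delta>: "0 < \<delta>" and D: "0 \<le> D"
  shows "real (card (grid_levels \<delta> f (cbox a b \<inter> grid_cell \<delta> m))) \<le> 2 * real DIM('a) * D / \<delta> + 2"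
proof (cases "cbox a b \<inter> grid_cell \<delta> m = {}")
  case True
  then show ?thesis
    using \<delta> D by (simp add: grid_levels_def)
next
  case False
  then obtain q where q: "q \<in> cbox a b" "q \<in> grid_cell \<delta> m"
    by blast
  have "f q - real DIM('a) * D \<le> f y \<and> f y \<le> f q + real DIM('a) * D" if y: "y \<in> cbox a b \<inter> grid_cell \<delta> m" for y
  proof -
    have "\<bar>y \<bullet> e - q \<bullet> e\<bar> \<le> \<delta>" if "e \<in> Basis" for e
      using y q that by (intro abs_diff_le_grid_ivl) (auto simp: grid_cell_def)
    then have "\<bar>f y - f q\<bar> \<le> real DIM('a) * D"
      using y q by (intro abs_diff_le_osc_coord_path[OF M osc]) auto
    then show ?thesis
      by linarith
  qed
  then have "real (card (grid_levels \<delta> f (cbox a b \<inter> grid_cell \<delta> m)))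
      \<le> ((f q + real DIM('a) * D) - (f q - real DIM('a) * D)) / \<delta> + 2"
    using D by (intro card_grid_levels_le \<delta>) auto
  then show ?thesis
    by (simp add: algebra_simps)
qed

lemma graph_cells_subset_Sigma:
  "graph_cells \<delta> (cbox a b) f \<subseteq>
     Sigma (\<Pi>\<^sub>E e\<in>Basis. grid_levels \<delta> (\<lambda>x. x \<bullet> e) (cbox a b)) (\<lambda>m. grid_levels \<delta> f (cbox a b \<inter> grid_cell \<delta> m))"
  by (auto simp: graph_cells_def grid_levels_def grid_cell_def)

lemma finite_graph_cells:
  fixes f :: "'a::euclidean_space \<Rightarrow> real"
  assumes M: "\<And>x. x \<in> cbox a b \<Longrightarrow> \<bar>f x\<bar> \<le> M" and \<delta>: "0 < \<delta>"
  shows "finite (graph_cells \<delta> (cbox a b) f)"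
proof (rule finite_subset[OF graph_cells_subset_Sigma], intro finite_SigmaI finite_PiE finite_Basis)
  show "finite (grid_levels \<delta> (\<lambda>x. x \<bullet> e) (cbox a b))" if "e \<in> Basis" for e
    using that by (intro finite_grid_levels[OF \<delta>]) (auto simp: mem_box)
  show "finite (grid_levels \<delta> f (cbox a b \<inter> grid_cell \<delta> m))" for m
    using M by (intro finite_grid_levels_bounded[OF \<delta>]) auto
qed

lemma card_graph_cells_le:
  fixes f :: "'a::euclidean_space \<Rightarrow> real" and D :: real
  assumes ab: "\<And>e. e \<in> Basis \<Longrightarrow> a \<bullet> e \<le> b \<bullet> e"
    and M: "\<And>x. x \<in> cbox a b \<Longrightarrow> \<bar>f x\<bar> \<le> M"
    and osc: "\<And>e x t. e \<in> Basis \<Longrightarrow> x \<in> cbox a b \<Longrightarrow> t \<in> {a \<bullet> e..b \<bullet> e} \<Longrightarrow>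
        osc (a \<bullet> e) (b \<bullet> e) \<delta> t (coord_sec f x e) \<le> D"
    and \<delta>: "0 < \<delta>" and D: "0 \<le> D"
  shows "real (card (graph_cells \<delta> (cbox a b) f))
      \<le> (\<Prod>e\<in>Basis. (b \<bullet> e - a \<bullet> e) / \<delta> + 2) * (2 * real DIM('a) * D / \<delta> + 2)"
proof -
  define C where "C = (\<Pi>\<^sub>E e\<in>Basis. grid_levels \<delta> (\<lambda>x. x \<bullet> e) (cbox a b))"
  let ?col = "\<lambda>m. grid_levels \<delta> f (cbox a b \<inter> grid_cell \<delta> m)"
  have box: "a \<bullet> e \<le> x \<bullet> e \<and> x \<bullet> e \<le> b \<bullet> e" if "x \<in> cbox a b" "e \<in> Basis" for x e
    using that by (auto simp: mem_box)
  have finC: "finite C"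
    unfolding C_def using box by (intro finite_PiE finite_Basis finite_grid_levels[OF \<delta>]) auto
  have fin_col: "finite (?col m)" for m
    using M by (intro finite_grid_levels_bounded[OF \<delta>]) auto
  have "graph_cells \<delta> (cbox a b) f \<subseteq> Sigma C ?col"
    unfolding C_def by (rule graph_cells_subset_Sigma)
  then have "real (card (graph_cells \<delta> (cbox a b) f)) \<le> (\<Sum>m\<in>C. real (card (?col m)))"
    unfolding of_nat_sum[symmetric] of_nat_le_iff using finC fin_col
    by (metis card_SigmaI card_mono finite_SigmaI)
  also have "\<dots> \<le> card C * (2 * real DIM('a) * D / \<delta> + 2)"
  proof (intro sum_bounded_above)
    show "real (card (?col m)) \<le> 2 * real DIM('a) * D / \<delta> + 2" for m
      using M osc \<delta> D by (rule card_grid_levels_cell_le)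
  qed
  moreover have "real (card C) \<le> (\<Prod>e\<in>Basis. (b \<bullet> e - a \<bullet> e) / \<delta> + 2)"
  proof -
    have "real (card C) = (\<Prod>e\<in>Basis. real (card (grid_levels \<delta> (\<lambda>x. x \<bullet> e) (cbox a b))))"
      unfolding C_def by (simp add: card_PiE)
    also have "\<dots> \<le> (\<Prod>e\<in>Basis. (b \<bullet> e - a \<bullet> e) / \<delta> + 2)"
      using box ab by (intro prod_mono conjI card_grid_levels_le[OF \<delta>]) auto
    finally show ?thesis .
  qed
  moreover have "0 \<le> 2 * real DIM('a) * D / \<delta> + 2"
    using \<delta> D by simp
  ultimately show ?thesis
    by (meson mult_right_mono order_trans)
qed

section \<open>Counting cells from below\<close>

lemma grid_ivl_overlaps_ivl:
  assumes "0 < \<delta>" "\<alpha> < \<beta>" "k \<in> {\<lfloor>\<alpha> / \<delta>\<rfloor> .. \<lceil>\<beta> / \<delta>\<rceil> - 1}"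
  shows "max (of_int k * \<delta>) \<alpha> < min ((of_int k + 1) * \<delta>) \<beta>"
proof -
  have "of_int k < \<beta> / \<delta>" "\<alpha> / \<delta> < of_int k + 1"
    using assms(3) by (simp_all add: less_ceiling_iff floor_le_iff)
  then have "of_int k * \<delta> < \<beta>" "\<alpha> < (of_int k + 1) * \<delta>"
    using assms(1) by (simp_all add: pos_less_divide_eq pos_divide_less_eq)
  then show ?thesis
    using assms(1,2) by (simp add: distrib_right)
qed

lemma card_grid_index_range_ge:
  assumes "0 < \<delta>" "\<alpha> \<le> \<beta>"
  shows "(\<beta> - \<alpha>) / \<delta> \<le> real (card {\<lfloor>\<alpha> / \<delta>\<rfloor> .. \<lceil>\<beta> / \<delta>\<rceil> - 1})"
proof -
  have "\<beta> / \<delta> \<le> real_of_int \<lceil>\<beta> / \<delta>\<rceil>" "real_of_int \<lfloor>\<alpha> / \<delta>\<rfloor> \<le> \<alpha> / \<delta>"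
    by linarith+
  moreover have "(\<beta> - \<alpha>) / \<delta> = \<beta> / \<delta> - \<alpha> / \<delta>"
    by (simp add: diff_divide_distrib)
  moreover have "real_of_int (\<lceil>\<beta> / \<delta>\<rceil> - \<lfloor>\<alpha> / \<delta>\<rfloor>) \<le> real (nat (\<lceil>\<beta> / \<delta>\<rceil> - \<lfloor>\<alpha> / \<delta>\<rfloor>))"
    by linarith
  moreover have "card {\<lfloor>\<alpha> / \<delta>\<rfloor> .. \<lceil>\<beta> / \<delta>\<rceil> - 1} = nat (\<lceil>\<beta> / \<delta>\<rceil> - \<lfloor>\<alpha> / \<delta>\<rfloor>)"
    by simp
  ultimately show ?thesis
    by linarith
qed

lemma face_grid_cell_meets_dense:
  fixes a b :: "'a::euclidean_space"
  assumes ab: "\<And>e. e \<in> Basis \<Longrightarrow> a \<bullet> e < b \<bullet> e" and e0: "e0 \<in> Basis" and \<delta>: "0 < \<delta>"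
    and dense: "{x \<in> cbox a b. x \<bullet> e0 = a \<bullet> e0} \<subseteq> closure A"
    and P: "\<And>e. e \<in> Basis - {e0} \<Longrightarrow> P e \<in> {\<lfloor>a \<bullet> e / \<delta>\<rfloor> .. \<lceil>b \<bullet> e / \<delta>\<rceil> - 1}"
  obtains x where "x \<in> A" "\<And>e. e \<in> Basis - {e0} \<Longrightarrow> x \<bullet> e \<in> grid_ivl \<delta> (P e)"
proof -
  define lo hi where "lo e = max (of_int (P e) * \<delta>) (a \<bullet> e)" and "hi e = min ((of_int (P e) + 1) * \<delta>) (b \<bullet> e)"
    for e
  have lo_hi: "lo e < hi e" if "e \<in> Basis - {e0}" for e
    unfolding lo_def hi_def using grid_ivl_overlaps_ivl[OF \<delta> ab P] that by blast
  define U where "U = (\<Inter>e\<in>Basis - {e0}. {x. of_int (P e) * \<delta> < x \<bullet> e} \<inter> {x. x \<bullet> e < (of_int (P e) + 1) * \<delta>})"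
  have "open U"
    unfolding U_def
    by (intro open_INT finite_Diff finite_Basis ballI open_Int open_halfspace_component_gt open_halfspace_component_lt)
  define y where "y = (\<Sum>e\<in>Basis. (if e = e0 then a \<bullet> e0 else (lo e + hi e) / 2) *\<^sub>R e)"
  have y_inner: "y \<bullet> e = (if e = e0 then a \<bullet> e0 else (lo e + hi e) / 2)" if "e \<in> Basis" for e
    unfolding y_def using that by (rule inner_sum_left_Basis)
  have bounds: "of_int (P e) * \<delta> \<le> lo e" "a \<bullet> e \<le> lo e" "hi e \<le> (of_int (P e) + 1) * \<delta>" "hi e \<le> b \<bullet> e"
    for e
    by (simp_all add: lo_def hi_def)
  have "a \<bullet> e \<le> y \<bullet> e \<and> y \<bullet> e \<le> b \<bullet> e" if "e \<in> Basis" for e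
    using that lo_hi[of e] bounds[of e] ab[OF that] by (auto simp: y_inner)
  moreover have "of_int (P e) * \<delta> < y \<bullet> e \<and> y \<bullet> e < (of_int (P e) + 1) * \<delta>" if "e \<in> Basis - {e0}" for e
    using that lo_hi[OF that] bounds[of e] by (auto simp: y_inner)
  ultimately have "y \<in> {x \<in> cbox a b. x \<bullet> e0 = a \<bullet> e0} \<inter> U"
    using e0 by (auto simp: mem_box U_def y_inner)
  then have "U \<inter> A \<noteq> {}"
    using dense open_Int_closure_eq_empty[OF \<open>open U\<close>] by blast
  then obtain x where "x \<in> A" "x \<in> U"
    by blast
  then show ?thesis
    using that[of x] by (force simp: U_def grid_ivl_def)
qed

lemma osc_on_le_card_grid_levels_cell:
  fixes f :: "'a::euclidean_space \<Rightarrow> real"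
  assumes cont: "continuous_on (cbox a b) f" and e0: "e0 \<in> Basis" and \<delta>: "0 < \<delta>"
    and x: "x \<in> cbox a b" and m: "\<And>e. e \<in> Basis - {e0} \<Longrightarrow> x \<bullet> e \<in> grid_ivl \<delta> (m e)"
    and k: "k \<in> grid_levels \<delta> id {a \<bullet> e0..b \<bullet> e0}"
  shows "osc_on (coord_sec f x e0) ({a \<bullet> e0..b \<bullet> e0} \<inter> grid_ivl \<delta> k)
      \<le> \<delta> * card (grid_levels \<delta> f (cbox a b \<inter> grid_cell \<delta> (m(e0 := k))))"
proof -
  obtain M where M: "\<And>x. x \<in> cbox a b \<Longrightarrow> \<bar>f x\<bar> \<le> M"
    using bounded_on_cbox[OF cont] by blast
  let ?g = "coord_sec f x e0"
  let ?I = "{a \<bullet> e0..b \<bullet> e0} \<inter> grid_ivl \<delta> k"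
  let ?J = "grid_levels \<delta> f (cbox a b \<inter> grid_cell \<delta> (m(e0 := k)))"
  have gM: "\<bar>?g t\<bar> \<le> M" if "t \<in> ?I" for t
    using abs_coord_sec_le[of a b f M e0 x t] M e0 x that by blast
  have "connected ?I"
    by (simp add: grid_ivl_def)
  then have conn: "connected (?g ` ?I)"
    using continuous_on_subset[OF continuous_on_coord_sec[OF cont e0 x]]
    by (intro connected_continuous_image) auto
  have "grid_levels \<delta> ?g ?I \<subseteq> ?J"
  proof
    fix j assume "j \<in> grid_levels \<delta> ?g ?I"
    then obtain t where t: "t \<in> ?I" "?g t \<in> grid_ivl \<delta> j"
      by (auto simp: grid_levels_def)
    have "x + (t - x \<bullet> e0) *\<^sub>R e0 \<in> cbox a b \<inter> grid_cell \<delta> (m(e0 := k))"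
      using coord_line_in_cbox[OF e0 x] t(1) m by (auto simp: grid_cell_def inner_coord_line[OF e0])
    then show "j \<in> ?J"
      using t(2) by (auto simp: grid_levels_def coord_sec_def)
  qed
  then have card_le: "card (grid_levels \<delta> ?g ?I) \<le> card ?J"
    using M by (intro card_mono finite_grid_levels_bounded[OF \<delta>]) auto
  show ?thesis
  proof (rule osc_on_le)
    show "?I \<noteq> {}"
      using k by (auto simp: grid_levels_def)
    fix y z assume "y \<in> ?I" "z \<in> ?I"
    then have "\<bar>?g y - ?g z\<bar> \<le> \<delta> * card (grid_levels \<delta> ?g ?I)"
      using gM by (intro abs_diff_le_card_grid_levels[OF conn _ \<delta>] finite_grid_levels_bounded[OF \<delta>])
    also have "\<dots> \<le> \<delta> * card ?J"
      using card_le \<delta> by simp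
    finally show "\<bar>?g y - ?g z\<bar> \<le> \<delta> * card ?J" .
  qed
qed

lemma Var_le_sum_card_grid_levels_cells:
  fixes f :: "'a::euclidean_space \<Rightarrow> real"
  assumes cont: "continuous_on (cbox a b) f" and e0: "e0 \<in> Basis" and \<delta>: "0 < \<delta>"
    and x: "x \<in> cbox a b" and m: "\<And>e. e \<in> Basis - {e0} \<Longrightarrow> x \<bullet> e \<in> grid_ivl \<delta> (m e)"
  shows "Var (a \<bullet> e0) (b \<bullet> e0) \<delta> (coord_sec f x e0)
      \<le> 3 * \<delta>\<^sup>2 * (\<Sum>k\<in>grid_levels \<delta> id {a \<bullet> e0..b \<bullet> e0}.
            real (card (grid_levels \<delta> f (cbox a b \<inter> grid_cell \<delta> (m(e0 := k))))))"
proof -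
  obtain M where M: "\<And>x. x \<in> cbox a b \<Longrightarrow> \<bar>f x\<bar> \<le> M"
    using bounded_on_cbox[OF cont] by blast
  have "Var (a \<bullet> e0) (b \<bullet> e0) \<delta> (coord_sec f x e0)
      \<le> 3 * \<delta> * (\<Sum>k\<in>grid_levels \<delta> id {a \<bullet> e0..b \<bullet> e0}.
            osc_on (coord_sec f x e0) ({a \<bullet> e0..b \<bullet> e0} \<inter> grid_ivl \<delta> k))"
    by (rule Var_le_sum_osc_on_grid[OF _ \<delta>]) (use abs_coord_sec_le[of a b f M e0 x] M e0 x in blast)
  also have "\<dots> \<le> 3 * \<delta> * (\<Sum>k\<in>grid_levels \<delta> id {a \<bullet> e0..b \<bullet> e0}.
            \<delta> * card (grid_levels \<delta> f (cbox a b \<inter> grid_cell \<delta> (m(e0 := k)))))"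
    using osc_on_le_card_grid_levels_cell[OF cont e0 \<delta> x m] \<delta> by (intro mult_left_mono sum_mono) auto
  finally show ?thesis
    by (simp add: sum_distrib_left power2_eq_square mult.assoc)
qed

lemma sum_card_grid_levels_columns_le:
  fixes f :: "'a::euclidean_space \<Rightarrow> real"
  assumes cont: "continuous_on (cbox a b) f" and \<delta>: "0 < \<delta>" and e0: "e0 \<in> Basis"
    and K: "finite K" and G: "finite G" "G \<subseteq> (Basis - {e0}) \<rightarrow>\<^sub>E UNIV"
  shows "(\<Sum>P\<in>G. \<Sum>k\<in>K. card (grid_levels \<delta> f (cbox a b \<inter> grid_cell \<delta> (P(e0 := k)))))
      \<le> card (graph_cells \<delta> (cbox a b) f)"
proof -
  obtain M where M: "\<And>x. x \<in> cbox a b \<Longrightarrow> \<bar>f x\<bar> \<le> M"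
    using bounded_on_cbox[OF cont] by blast
  let ?col = "\<lambda>m. grid_levels \<delta> f (cbox a b \<inter> grid_cell \<delta> m)"
  let ?\<Phi> = "\<lambda>(k, P). P(e0 := k)"
  have fin_col: "finite (?col m)" for m
    using M by (intro finite_grid_levels_bounded[OF \<delta>]) auto
  have inj: "inj_on ?\<Phi> (K \<times> G)"
    by (rule inj_on_subset[OF inj_combinator[of e0 "Basis - {e0}" "\<lambda>_. UNIV"]]) (use G(2) in auto)
  have "(\<Sum>P\<in>G. \<Sum>k\<in>K. card (?col (P(e0 := k)))) = (\<Sum>(k, P)\<in>K \<times> G. card (?col (P(e0 := k))))"
    by (subst sum.swap) (simp add: sum.cartesian_product)
  also have "\<dots> = (\<Sum>m\<in>?\<Phi> ` (K \<times> G). card (?col m))"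
    by (subst sum.reindex[OF inj]) (simp add: case_prod_unfold)
  also have "\<dots> = card (Sigma (?\<Phi> ` (K \<times> G)) ?col)"
    using K G fin_col by (intro card_SigmaI[symmetric] finite_imageI finite_cartesian_product) auto
  also have "\<dots> \<le> card (graph_cells \<delta> (cbox a b) f)"
  proof (rule card_mono)
    show "finite (graph_cells \<delta> (cbox a b) f)"
      using M \<delta> by (rule finite_graph_cells)
    have "?\<Phi> ` (K \<times> G) \<subseteq> Basis \<rightarrow>\<^sub>E UNIV"
      using G(2) e0 by (auto simp: PiE_def extensional_def)
    then show "Sigma (?\<Phi> ` (K \<times> G)) ?col \<subseteq> graph_cells \<delta> (cbox a b) f"
      unfolding graph_cells_def by blast
  qed
  finally show ?thesis .
qed

lemma card_graph_cells_ge: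
  fixes f :: "'a::euclidean_space \<Rightarrow> real"
  assumes ab: "\<And>e. e \<in> Basis \<Longrightarrow> a \<bullet> e < b \<bullet> e" and cont: "continuous_on (cbox a b) f"
    and e0: "e0 \<in> Basis" and \<delta>: "0 < \<delta>"
    and A: "A \<subseteq> cbox a b" and dense: "{x \<in> cbox a b. x \<bullet> e0 = a \<bullet> e0} \<subseteq> closure A"
    and C: "0 \<le> C" "\<And>x. x \<in> A \<Longrightarrow> C \<le> Var (a \<bullet> e0) (b \<bullet> e0) \<delta> (coord_sec f x e0)"
  shows "(\<Prod>e\<in>Basis - {e0}. (b \<bullet> e - a \<bullet> e) / \<delta>) * C \<le> 3 * \<delta>\<^sup>2 * card (graph_cells \<delta> (cbox a b) f)"
proof -
  \<comment> \<open>The cells of the face whose interiors meet the face; each contains a point of A.\<close>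
  define G where "G = (\<Pi>\<^sub>E e\<in>Basis - {e0}. {\<lfloor>a \<bullet> e / \<delta>\<rfloor> .. \<lceil>b \<bullet> e / \<delta>\<rceil> - 1})"
  let ?K = "grid_levels \<delta> id {a \<bullet> e0..b \<bullet> e0}"
  let ?N = "\<lambda>P k. real (card (grid_levels \<delta> f (cbox a b \<inter> grid_cell \<delta> (P(e0 := k)))))"
  have finG: "finite G"
    unfolding G_def by (intro finite_PiE) auto
  have column_sum: "C \<le> 3 * \<delta>\<^sup>2 * (\<Sum>k\<in>?K. ?N P k)" if "P \<in> G" for P
  proof -
    obtain x where "x \<in> A" "\<And>e. e \<in> Basis - {e0} \<Longrightarrow> x \<bullet> e \<in> grid_ivl \<delta> (P e)"
      using face_grid_cell_meets_dense[OF ab e0 \<delta> dense, of P] \<open>P \<in> G\<close> unfolding G_def by blast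
    then show ?thesis
      using C(2) Var_le_sum_card_grid_levels_cells[OF cont e0 \<delta>, of x P] A by fastforce
  qed
  have "(\<Prod>e\<in>Basis - {e0}. (b \<bullet> e - a \<bullet> e) / \<delta>) \<le> real (card G)"
    unfolding G_def card_PiE[OF finite_Diff[OF finite_Basis]] of_nat_prod
    using ab \<delta> by (intro prod_mono conjI card_grid_index_range_ge) (auto simp: less_imp_le)
  then have "(\<Prod>e\<in>Basis - {e0}. (b \<bullet> e - a \<bullet> e) / \<delta>) * C \<le> (\<Sum>P\<in>G. C)"
    using C(1) by (simp add: mult_right_mono)
  also have "\<dots> \<le> (\<Sum>P\<in>G. 3 * \<delta>\<^sup>2 * (\<Sum>k\<in>?K. ?N P k))"
    using column_sum by (rule sum_mono)
  also have "\<dots> = 3 * \<delta>\<^sup>2 * (\<Sum>P\<in>G. \<Sum>k\<in>?K. ?N P k)"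
    by (simp add: sum_distrib_left)
  also have "\<dots> \<le> 3 * \<delta>\<^sup>2 * card (graph_cells \<delta> (cbox a b) f)"
  proof -
    have "(\<Sum>P\<in>G. \<Sum>k\<in>?K. card (grid_levels \<delta> f (cbox a b \<inter> grid_cell \<delta> (P(e0 := k)))))
        \<le> card (graph_cells \<delta> (cbox a b) f)"
      by (rule sum_card_grid_levels_columns_le[OF cont \<delta> e0 finite_grid_levels_ivl[OF \<delta>] finG])
        (auto simp: G_def PiE_def)
    then have "(\<Sum>P\<in>G. \<Sum>k\<in>?K. ?N P k) \<le> card (graph_cells \<delta> (cbox a b) f)"
      by (metis (mono_tags, lifting) of_nat_le_iff of_nat_sum sum.cong)
    then show ?thesis
      by (simp add: mult_left_mono)
  qed
  finally show ?thesis .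
qed

section \<open>Box dimension from counting bounds\<close>

lemma eventually_at_right_0_lt_1: "\<forall>\<^sub>F \<delta> in at_right (0::real). 0 < \<delta> \<and> \<delta> < 1"
  by (simp add: eventually_at_right_field) (meson zero_less_one)

lemma ln_ratio_tendsto: "((\<lambda>\<delta>::real. C / ln (1 / \<delta>) + D) \<longlongrightarrow> D) (at_right 0)"
proof -
  have "((\<lambda>\<delta>::real. C / ln (1 / \<delta>)) \<longlongrightarrow> 0) (at_right 0)"
    by real_asymp
  then show ?thesis
    using tendsto_add[OF _ tendsto_const[of D]] by fastforce
qed

lemma ln_mult_powr_ratio:
  fixes K \<delta> D :: real
  assumes "0 < K" "0 < \<delta>" "\<delta> < 1"
  shows "ln (K * \<delta> powr - D) / ln (1 / \<delta>) = ln K / ln (1 / \<delta>) + D"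
proof -
  have "0 < ln (1 / \<delta>)"
    using assms(2,3) by simp
  then show ?thesis
    using assms by (simp add: ln_mult ln_powr ln_div field_simps)
qed

lemma eventually_ln_ratio_le:
  fixes N :: "real \<Rightarrow> real"
  assumes "0 < K" "\<forall>\<^sub>F \<delta> in at_right 0. 1 \<le> N \<delta> \<and> N \<delta> \<le> K * \<delta> powr - D"
  shows "\<forall>\<^sub>F \<delta> in at_right 0. ln (N \<delta>) / ln (1 / \<delta>) \<le> ln K / ln (1 / \<delta>) + D"
proof -
  from eventually_at_right_0_lt_1 assms(2) show ?thesis
  proof eventually_elim
    case (elim \<delta>)
    then have "ln (N \<delta>) \<le> ln (K * \<delta> powr - D)"
      using assms(1) by (subst ln_le_cancel_iff) auto
    then have "ln (N \<delta>) / ln (1 / \<delta>) \<le> ln (K * \<delta> powr - D) / ln (1 / \<delta>)"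
      using elim by (intro divide_right_mono) auto
    then show ?case
      using elim ln_mult_powr_ratio[OF assms(1)] by simp
  qed
qed

lemma eventually_ln_ratio_ge:
  fixes N :: "real \<Rightarrow> real"
  assumes "0 < k" "\<forall>\<^sub>F \<delta> in at_right 0. k * \<delta> powr - D \<le> N \<delta>"
  shows "\<forall>\<^sub>F \<delta> in at_right 0. ln k / ln (1 / \<delta>) + D \<le> ln (N \<delta>) / ln (1 / \<delta>)"
proof -
  from eventually_at_right_0_lt_1 assms(2) show ?thesis
  proof eventually_elim
    case (elim \<delta>)
    moreover have "0 < k * \<delta> powr - D"
      using assms(1) elim by simp
    ultimately have "ln (k * \<delta> powr - D) \<le> ln (N \<delta>)"
      by (subst ln_le_cancel_iff) auto
    then have "ln (k * \<delta> powr - D) / ln (1 / \<delta>) \<le> ln (N \<delta>) / ln (1 / \<delta>)"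
      using elim by (intro divide_right_mono) auto
    then show ?case
      using elim ln_mult_powr_ratio[OF assms(1)] by simp
  qed
qed

lemma upper_box_dim_le:
  fixes A :: "'a::euclidean_space set"
  assumes "0 < K" "\<forall>\<^sub>F \<delta> in at_right 0. 1 \<le> real (grid_count \<delta> A) \<and> grid_count \<delta> A \<le> K * \<delta> powr - D"
  shows "upper_box_dim A \<le> ereal D"
proof -
  have "upper_box_dim A \<le> Limsup (at_right 0) (\<lambda>\<delta>. ereal (ln K / ln (1 / \<delta>) + D))"
    unfolding upper_box_dim_def using eventually_ln_ratio_le[OF assms]
    by (intro Limsup_mono) (auto elim: eventually_mono)
  also have "\<dots> = ereal D"
    using ln_ratio_tendsto by (intro lim_imp_Limsup) (auto simp: tendsto_ereal)
  finally show ?thesis .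
qed

lemma lower_box_dim_ge:
  fixes A :: "'a::euclidean_space set"
  assumes "0 < k" "\<forall>\<^sub>F \<delta> in at_right 0. k * \<delta> powr - D \<le> grid_count \<delta> A"
  shows "ereal D \<le> lower_box_dim A"
proof -
  have "ereal D = Liminf (at_right 0) (\<lambda>\<delta>. ereal (ln k / ln (1 / \<delta>) + D))"
    using ln_ratio_tendsto by (intro lim_imp_Liminf[symmetric]) (auto simp: tendsto_ereal)
  also have "\<dots> \<le> lower_box_dim A"
    unfolding lower_box_dim_def using eventually_ln_ratio_ge[OF assms]
    by (intro Liminf_mono) (auto elim: eventually_mono)
  finally show ?thesis .
qed

lemma has_box_dim_if_bounds:
  assumes "upper_box_dim A \<le> ereal d" "ereal d \<le> lower_box_dim A"
  shows "has_box_dim A d"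
proof -
  let ?r = "\<lambda>\<delta>. ereal (ln (real (grid_count \<delta> A)) / ln (1 / \<delta>))"
  have "Liminf (at_right 0) ?r \<le> Limsup (at_right 0) ?r"
    by (rule Liminf_le_Limsup) simp
  then have "Liminf (at_right 0) ?r = ereal d" "Limsup (at_right 0) ?r = ereal d"
    using assms unfolding upper_box_dim_def lower_box_dim_def by auto
  then have "(?r \<longlongrightarrow> ereal d) (at_right 0)"
    by (intro Liminf_eq_Limsup) auto
  then show ?thesis
    unfolding has_box_dim_def by simp
qed

lemma upper_box_dim_eq_if_has_box_dim:
  assumes "has_box_dim A d"
  shows "upper_box_dim A = ereal d"
  using assms unfolding has_box_dim_def upper_box_dim_def
  by (intro lim_imp_Limsup) (auto simp: tendsto_ereal)

lemma prod_divide_add_le_powr: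
  fixes w :: "'b \<Rightarrow> real"
  assumes "finite S" "0 < \<delta>" "\<delta> \<le> 1" "\<And>e. e \<in> S \<Longrightarrow> 0 \<le> w e"
  shows "(\<Prod>e\<in>S. w e / \<delta> + 2) \<le> (\<Prod>e\<in>S. w e + 2) * \<delta> powr - real (card S)"
proof -
  have "(\<Prod>e\<in>S. w e / \<delta> + 2) \<le> (\<Prod>e\<in>S. (w e + 2) / \<delta>)"
  proof (rule prod_mono)
    fix e assume "e \<in> S"
    moreover have "2 \<le> 2 / \<delta>"
      using assms(2,3) by (simp add: le_divide_eq)
    ultimately show "0 \<le> w e / \<delta> + 2 \<and> w e / \<delta> + 2 \<le> (w e + 2) / \<delta>"
      using assms(2,4) by (simp add: add_divide_distrib)
  qed
  also have "\<dots> = (\<Prod>e\<in>S. w e + 2) * \<delta> powr - real (card S)"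
    using assms(2) by (simp add: prod_dividef powr_minus_divide powr_realpow)
  finally show ?thesis .
qed

lemma powr_divide_add_le:
  fixes C \<delta> h :: real
  assumes "0 < \<delta>" "\<delta> \<le> 1" "h \<le> 1" "0 \<le> C"
  shows "C * \<delta> powr h / \<delta> + 2 \<le> (C + 2) * \<delta> powr (h - 1)"
proof -
  have "C * \<delta> powr h / \<delta> = C * \<delta> powr (h - 1)"
    using assms(1) by (simp add: powr_diff)
  moreover have "1 \<le> \<delta> powr (h - 1)"
    using assms powr_mono'[of "h - 1" 0 \<delta>] by simp
  ultimately show ?thesis
    by (simp add: algebra_simps)
qed

lemma graph_cells_nonempty:
  assumes "x \<in> S" "0 < \<delta>"
  shows "graph_cells \<delta> S f \<noteq> {}"
proof -
  have "(restrict (\<lambda>e. \<lfloor>x \<bullet> e / \<delta>\<rfloor>) Basis, \<lfloor>f x / \<delta>\<rfloor>) \<in> graph_cells \<delta> S f"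
    using assms mem_grid_ivl_floor[OF assms(2)]
    by (auto simp: graph_cells_def grid_levels_def grid_cell_def)
  then show ?thesis
    by blast
qed

lemma one_le_card_graph_cells:
  fixes f :: "'a::euclidean_space \<Rightarrow> real"
  assumes ab: "\<And>e. e \<in> Basis \<Longrightarrow> a \<bullet> e \<le> b \<bullet> e" and M: "\<And>x. x \<in> cbox a b \<Longrightarrow> \<bar>f x\<bar> \<le> M"
    and \<delta>: "0 < \<delta>"
  shows "1 \<le> card (graph_cells \<delta> (cbox a b) f)"
proof -
  have "cbox a b \<noteq> {}"
    using ab by (simp add: box_ne_empty)
  then have "graph_cells \<delta> (cbox a b) f \<noteq> {}"
    using graph_cells_nonempty \<delta> by blast
  moreover have "finite (graph_cells \<delta> (cbox a b) f)"
    using M \<delta> by (rule finite_graph_cells)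
  ultimately show ?thesis
    by (simp add: Suc_le_eq card_gt_0_iff)
qed

lemma card_graph_cells_le_powr:
  fixes f :: "'a::euclidean_space \<Rightarrow> real" and c h :: real
  assumes ab: "\<And>e. e \<in> Basis \<Longrightarrow> a \<bullet> e \<le> b \<bullet> e" and M: "\<And>x. x \<in> cbox a b \<Longrightarrow> \<bar>f x\<bar> \<le> M"
    and h: "h \<le> 1" and c: "0 \<le> c" and \<delta>: "0 < \<delta>" "\<delta> \<le> 1"
    and osc: "\<And>e x t. e \<in> Basis \<Longrightarrow> x \<in> cbox a b \<Longrightarrow> t \<in> {a \<bullet> e..b \<bullet> e} \<Longrightarrow>
        osc (a \<bullet> e) (b \<bullet> e) \<delta> t (coord_sec f x e) \<le> c * \<delta> powr h"
  shows "real (card (graph_cells \<delta> (cbox a b) f))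
      \<le> (\<Prod>e\<in>Basis. b \<bullet> e - a \<bullet> e + 2) * (2 * real DIM('a) * c + 2) * \<delta> powr - (real DIM('a) + 1 - h)"
proof -
  define L where "L = (\<Prod>e\<in>Basis. b \<bullet> e - a \<bullet> e + 2)"
  have "real (card (graph_cells \<delta> (cbox a b) f))
      \<le> (\<Prod>e\<in>Basis. (b \<bullet> e - a \<bullet> e) / \<delta> + 2) * (2 * real DIM('a) * (c * \<delta> powr h) / \<delta> + 2)"
    using ab M osc \<delta>(1) mult_nonneg_nonneg[OF c powr_ge_zero] by (rule card_graph_cells_le)
  also have "\<dots> \<le> (L * \<delta> powr - real DIM('a)) * ((2 * real DIM('a) * c + 2) * \<delta> powr (h - 1))"
  proof (rule mult_mono)
    show "(\<Prod>e\<in>Basis. (b \<bullet> e - a \<bullet> e) / \<delta> + 2) \<le> L * \<delta> powr - real DIM('a)"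
      unfolding L_def using ab \<delta> by (intro prod_divide_add_le_powr) auto
    show "2 * real DIM('a) * (c * \<delta> powr h) / \<delta> + 2 \<le> (2 * real DIM('a) * c + 2) * \<delta> powr (h - 1)"
      using powr_divide_add_le[OF \<delta> h, of "2 * real DIM('a) * c"] c by simp
    show "0 \<le> L * \<delta> powr - real DIM('a)"
      unfolding L_def using ab by (intro mult_nonneg_nonneg prod_nonneg) (auto simp: add_nonneg_nonneg)
  qed (use c \<delta> in auto)
  also have "\<dots> = L * (2 * real DIM('a) * c + 2) * \<delta> powr - (real DIM('a) + 1 - h)"
    using \<delta> by (simp add: powr_add[symmetric] algebra_simps)
  finally show ?thesis
    by (simp add: L_def)
qed

lemma upper_box_dim_graph_le:
  fixes f :: "'a::euclidean_space \<Rightarrow> real" and c h :: real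
  assumes ab: "\<And>e. e \<in> Basis \<Longrightarrow> a \<bullet> e \<le> b \<bullet> e" and cont: "continuous_on (cbox a b) f"
    and h: "h \<le> 1" and c: "0 \<le> c"
    and osc: "\<forall>\<^sub>F \<delta> in at_right 0. \<forall>e\<in>Basis. \<forall>x\<in>cbox a b. \<forall>t\<in>{a \<bullet> e..b \<bullet> e}.
        osc (a \<bullet> e) (b \<bullet> e) \<delta> t (coord_sec f x e) \<le> c * \<delta> powr h"
  shows "upper_box_dim (graph (cbox a b) f) \<le> ereal (real DIM('a) + 1 - h)"
proof (rule upper_box_dim_le)
  obtain M where M: "\<And>x. x \<in> cbox a b \<Longrightarrow> \<bar>f x\<bar> \<le> M"
    using bounded_on_cbox[OF cont] by blast
  let ?K = "(\<Prod>e\<in>Basis. b \<bullet> e - a \<bullet> e + 2) * (2 * real DIM('a) * c + 2)"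
  show "0 < ?K"
    using ab c by (intro mult_pos_pos prod_pos) (auto simp: add_nonneg_pos)
  from eventually_at_right_0_lt_1 osc show "\<forall>\<^sub>F \<delta> in at_right 0. 1 \<le> real (grid_count \<delta> (graph (cbox a b) f)) \<and>
      grid_count \<delta> (graph (cbox a b) f) \<le> ?K * \<delta> powr - (real DIM('a) + 1 - h)"
  proof eventually_elim
    case (elim \<delta>)
    then show ?case
      using one_le_card_graph_cells[OF ab M] card_graph_cells_le_powr[OF ab M h c] 
      by (auto simp: grid_count_graph)
  qed
qed

lemma card_graph_cells_ge_powr:
  fixes f :: "'a::euclidean_space \<Rightarrow> real" and c h :: real
  assumes ab: "\<And>e. e \<in> Basis \<Longrightarrow> a \<bullet> e < b \<bullet> e" and cont: "continuous_on (cbox a b) f"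
    and e0: "e0 \<in> Basis" and A: "A \<subseteq> cbox a b" and dense: "{x \<in> cbox a b. x \<bullet> e0 = a \<bullet> e0} \<subseteq> closure A"
    and c: "0 \<le> c" and \<delta>: "0 < \<delta>"
    and var: "\<And>x. x \<in> A \<Longrightarrow> c * \<delta> powr h \<le> Var (a \<bullet> e0) (b \<bullet> e0) \<delta> (coord_sec f x e0)"
  shows "(\<Prod>e\<in>Basis - {e0}. b \<bullet> e - a \<bullet> e) * c / 3 * \<delta> powr - (real DIM('a) + 1 - h)
      \<le> card (graph_cells \<delta> (cbox a b) f)"
proof -
  define L where "L = (\<Prod>e\<in>Basis - {e0}. b \<bullet> e - a \<bullet> e)"
  have "real (card (Basis - {e0})) = real DIM('a) - 1"
    using e0 by (simp add: Suc_le_eq)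
  moreover have "(\<Prod>e\<in>Basis - {e0}. (b \<bullet> e - a \<bullet> e) / \<delta>) = L / \<delta> ^ card (Basis - {e0})"
    by (simp add: L_def prod_dividef)
  ultimately have "(\<Prod>e\<in>Basis - {e0}. (b \<bullet> e - a \<bullet> e) / \<delta>) = L / \<delta> powr (real DIM('a) - 1)"
    using \<delta> by (metis powr_realpow)
  moreover have "(\<Prod>e\<in>Basis - {e0}. (b \<bullet> e - a \<bullet> e) / \<delta>) * (c * \<delta> powr h)
      \<le> 3 * \<delta>\<^sup>2 * card (graph_cells \<delta> (cbox a b) f)"
    using c \<delta> by (intro card_graph_cells_ge[OF ab cont e0 _ A dense] var) auto
  moreover have "3 * \<delta>\<^sup>2 * (L * c / 3 * \<delta> powr - (real DIM('a) + 1 - h))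
      = L / \<delta> powr (real DIM('a) - 1) * (c * \<delta> powr h)"
  proof -
    have "3 * \<delta>\<^sup>2 * (L * c / 3 * \<delta> powr - (real DIM('a) + 1 - h))
        = L * c * (\<delta> powr 2 * \<delta> powr - (real DIM('a) + 1 - h))"
      using \<delta> by (simp add: powr_numeral)
    also have "\<dots> = L * c * (\<delta> powr h / \<delta> powr (real DIM('a) - 1))"
      by (simp add: powr_add[symmetric] powr_diff[symmetric] algebra_simps)
    finally show ?thesis
      by simp
  qed
  ultimately have "3 * \<delta>\<^sup>2 * (L * c / 3 * \<delta> powr - (real DIM('a) + 1 - h))
      \<le> 3 * \<delta>\<^sup>2 * card (graph_cells \<delta> (cbox a b) f)"
    by simp
  then show ?thesis
    using \<delta> by (simp add: L_def)
qed

lemma lower_box_dim_graph_ge: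
  fixes f :: "'a::euclidean_space \<Rightarrow> real" and c h :: real
  assumes ab: "\<And>e. e \<in> Basis \<Longrightarrow> a \<bullet> e < b \<bullet> e" and cont: "continuous_on (cbox a b) f"
    and e0: "e0 \<in> Basis" and A: "A \<subseteq> cbox a b" and dense: "{x \<in> cbox a b. x \<bullet> e0 = a \<bullet> e0} \<subseteq> closure A"
    and c: "0 < c"
    and var: "\<forall>\<^sub>F \<delta> in at_right 0. \<forall>x\<in>A. c * \<delta> powr h \<le> Var (a \<bullet> e0) (b \<bullet> e0) \<delta> (coord_sec f x e0)"
  shows "ereal (real DIM('a) + 1 - h) \<le> lower_box_dim (graph (cbox a b) f)"
proof (rule lower_box_dim_ge)
  have "0 < (\<Prod>e\<in>Basis - {e0}. b \<bullet> e - a \<bullet> e)"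
    using ab by (intro prod_pos) simp
  then show "0 < (\<Prod>e\<in>Basis - {e0}. b \<bullet> e - a \<bullet> e) * c / 3"
    using c by simp
  from eventually_at_right_0_lt_1 var show "\<forall>\<^sub>F \<delta> in at_right 0. (\<Prod>e\<in>Basis - {e0}. b \<bullet> e - a \<bullet> e) * c / 3
      * \<delta> powr - (real DIM('a) + 1 - h) \<le> grid_count \<delta> (graph (cbox a b) f)"
  proof eventually_elim
    case (elim \<delta>)
    then show ?case
      using card_graph_cells_ge_powr[OF ab cont e0 A dense _ _] c by (simp add: grid_count_graph)
  qed
qed

section \<open>Graphs of functions on boxes and their sections\<close>

lemma graph1_eq_graph: "graph1 \<alpha> \<beta> g = graph (cbox \<alpha> \<beta>) g"
  by (simp add: graph1_def graph_def cbox_interval)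

lemma coord_sec_real: "coord_sec g y 1 = g"
  by (simp add: coord_sec_def fun_eq_iff)

lemma upper_box_dim_graph1_le:
  fixes g :: "real \<Rightarrow> real" and c h :: real
  assumes "\<alpha> \<le> \<beta>" "continuous_on {\<alpha>..\<beta>} g" "h \<le> 1" "0 \<le> c"
    and "\<forall>\<^sub>F \<delta> in at_right 0. \<forall>t\<in>{\<alpha>..\<beta>}. osc \<alpha> \<beta> \<delta> t g \<le> c * \<delta> powr h"
  shows "upper_box_dim (graph1 \<alpha> \<beta> g) \<le> ereal (2 - h)"
  using upper_box_dim_graph_le[of \<alpha> \<beta> g h c] assms by (simp add: graph1_eq_graph coord_sec_real cbox_interval)

lemma lower_box_dim_graph1_ge:
  fixes g :: "real \<Rightarrow> real" and c h :: real
  assumes "\<alpha> < \<beta>" "continuous_on {\<alpha>..\<beta>} g" "0 < c"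
    and "\<forall>\<^sub>F \<delta> in at_right 0. c * \<delta> powr h \<le> Var \<alpha> \<beta> \<delta> g"
  shows "ereal (2 - h) \<le> lower_box_dim (graph1 \<alpha> \<beta> g)"
  using lower_box_dim_graph_ge[of \<alpha> \<beta> g 1 "{\<alpha>}" c h] assms
  by (simp add: graph1_eq_graph coord_sec_real cbox_interval subset_iff)

lemma coord_sec_axis: "coord_sec f x (axis i 1) = fsec f x i"
proof
  fix t
  have "x \<bullet> axis i 1 = x $ i"
    by (simp add: inner_axis)
  then have "x + (t - x \<bullet> axis i 1) *\<^sub>R axis i 1 = setcoord x i t"
    by (simp add: setcoord_def vec_eq_iff axis_def)
  then show "coord_sec f x (axis i 1) t = fsec f x i t"
    by (simp add: coord_sec_def fsec_def)
qed

lemma graphn_eq_graph: "graphn Q f = graph Q f"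
  by (simp add: graphn_def graph_def)

lemma Basis_vec_axis: "(Basis :: (real^'n) set) = range (\<lambda>i. axis i 1)"
  by (auto simp: Basis_vec_def)

lemma osc_hyp_eventually:
  assumes "osc_hyp a b f H"
  obtains c where "\<And>i. 0 < c i"
    "\<forall>\<^sub>F \<delta> in at_right 0. \<forall>i. \<forall>x\<in>cbox a b. \<forall>t\<in>{a$i..b$i}. osc (a$i) (b$i) \<delta> t (fsec f x i) \<le> c i * \<delta> powr H i"
proof -
  obtain c \<delta>0 where "\<And>i. 0 < c i" "0 < \<delta>0" "\<And>\<delta>. 0 < \<delta> \<Longrightarrow> \<delta> < \<delta>0 \<Longrightarrow>
      \<forall>i. \<forall>x\<in>cbox a b. \<forall>t\<in>{a$i..b$i}. osc (a$i) (b$i) \<delta> t (fsec f x i) \<le> c i * \<delta> powr H i"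
    using assms unfolding osc_hyp_def by blast
  then show ?thesis
    using that[of c] unfolding eventually_at_right_field by blast
qed

lemma var_hyp_eventually:
  assumes "var_hyp a b f H"
  obtains c A where "\<And>i. 0 < c i" "\<And>i. A i \<subseteq> {x \<in> cbox a b. x$i = a$i}"
    "\<And>i. {x \<in> cbox a b. x$i = a$i} \<subseteq> closure (A i)"
    "\<And>i. \<forall>\<^sub>F \<delta> in at_right 0. \<forall>x\<in>A i. c i * \<delta> powr H i \<le> Var (a$i) (b$i) \<delta> (fsec f x i)"
proof -
  obtain A c where hyp: "\<And>i. 0 < c i \<and> A i \<subseteq> {x \<in> cbox a b. x$i = a$i} \<and>
      {x \<in> cbox a b. x$i = a$i} \<subseteq> closure (A i) \<and>
      (\<exists>\<delta>0>0. \<forall>\<delta>. 0 < \<delta> \<and> \<delta> < \<delta>0 \<longrightarrow> (\<forall>x\<in>A i. c i * \<delta> powr H i \<le> Var (a$i) (b$i) \<delta> (fsec f x i)))"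
    using assms unfolding var_hyp_def by blast
  show ?thesis
  proof (rule that[of c A])
    show "\<forall>\<^sub>F \<delta> in at_right 0. \<forall>x\<in>A i. c i * \<delta> powr H i \<le> Var (a$i) (b$i) \<delta> (fsec f x i)" for i
      using hyp[of i] unfolding eventually_at_right_field by blast
  qed (use hyp in blast)+
qed

lemma upper_box_dim_graphn_le:
  fixes a b :: "real^'n" and f :: "real^'n \<Rightarrow> real" and H :: "'n \<Rightarrow> real"
  assumes ab: "\<And>i. a$i \<le> b$i" and cont: "continuous_on (cbox a b) f" and H: "\<And>i. H i \<le> 1"
    and hyp: "osc_hyp a b f H"
  shows "upper_box_dim (graphn (cbox a b) f) \<le> ereal (real CARD('n) + 1 - Min (range H))"
proof -
  define h where "h = Min (range H)"
  have h: "h \<le> H i" for i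
    unfolding h_def by (rule Min_le) auto
  obtain c where c: "\<And>i. 0 < c i" and osc: "\<forall>\<^sub>F \<delta> in at_right 0. \<forall>i. \<forall>x\<in>cbox a b. \<forall>t\<in>{a$i..b$i}.
      osc (a$i) (b$i) \<delta> t (fsec f x i) \<le> c i * \<delta> powr H i"
    using osc_hyp_eventually[OF hyp] by blast
  define C where "C = (\<Sum>i\<in>UNIV. c i)"
  have c_le_C: "c i \<le> C" for i
    unfolding C_def using c by (intro member_le_sum) (auto simp: less_imp_le)
  from eventually_at_right_0_lt_1 osc have "\<forall>\<^sub>F \<delta> in at_right 0. \<forall>e\<in>Basis. \<forall>x\<in>cbox a b. \<forall>t\<in>{a \<bullet> e..b \<bullet> e}.
      osc (a \<bullet> e) (b \<bullet> e) \<delta> t (coord_sec f x e) \<le> C * \<delta> powr h"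
  proof eventually_elim
    case (elim \<delta>)
    have "osc (a$i) (b$i) \<delta> t (fsec f x i) \<le> C * \<delta> powr h" if "x \<in> cbox a b" "t \<in> {a$i..b$i}" for i x t
    proof -
      have "osc (a$i) (b$i) \<delta> t (fsec f x i) \<le> c i * \<delta> powr H i"
        using elim that by blast
      also have "\<dots> \<le> C * \<delta> powr h"
        using c_le_C[of i] c[of i] elim h[of i] by (intro mult_mono powr_mono') auto
      finally show ?thesis .
    qed
    then show ?case
      by (auto simp: Basis_vec_axis inner_axis coord_sec_axis)
  qed
  moreover have "h \<le> 1"
    using h H order_trans by blast
  moreover have "0 \<le> C"
    unfolding C_def using c by (simp add: sum_nonneg less_imp_le)
  ultimately have "upper_box_dim (graph (cbox a b) f) \<le> ereal (real DIM(real^'n) + 1 - h)"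
    using ab by (intro upper_box_dim_graph_le cont) (auto simp: Basis_vec_axis inner_axis)
  then show ?thesis
    by (simp add: graphn_eq_graph h_def)
qed

lemma lower_box_dim_graphn_ge:
  fixes a b :: "real^'n" and f :: "real^'n \<Rightarrow> real" and H :: "'n \<Rightarrow> real"
  assumes ab: "\<And>i. a$i < b$i" and cont: "continuous_on (cbox a b) f" and hyp: "var_hyp a b f H"
  shows "ereal (real CARD('n) + 1 - Min (range H)) \<le> lower_box_dim (graphn (cbox a b) f)"
proof -
  have "Min (range H) \<in> range H"
    by (rule Min_in) auto
  then obtain i0 where i0: "H i0 = Min (range H)"
    by (metis rangeE)
  obtain c A where c: "\<And>i. 0 < c i" and A: "\<And>i. A i \<subseteq> {x \<in> cbox a b. x$i = a$i}"
    and dense: "\<And>i. {x \<in> cbox a b. x$i = a$i} \<subseteq> closure (A i)"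
    and var: "\<And>i. \<forall>\<^sub>F \<delta> in at_right 0. \<forall>x\<in>A i. c i * \<delta> powr H i \<le> Var (a$i) (b$i) \<delta> (fsec f x i)"
    using var_hyp_eventually[OF hyp] by blast
  have "ereal (real DIM(real^'n) + 1 - H i0) \<le> lower_box_dim (graph (cbox a b) f)"
  proof (rule lower_box_dim_graph_ge[of a b f "axis i0 1" "A i0" "c i0" "H i0", OF _ cont])
    show "a \<bullet> e < b \<bullet> e" if "e \<in> Basis" for e
      using that ab by (auto simp: Basis_vec_axis inner_axis)
    show "axis i0 (1::real) \<in> Basis"
      by (simp add: Basis_real_def)
  qed (use A[of i0] dense[of i0] var[of i0] c[of i0] in \<open>auto simp: inner_axis coord_sec_axis\<close>)
  then show ?thesis
    by (simp add: graphn_eq_graph i0)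
qed

lemma continuous_on_fsec:
  fixes a b :: "real^'n"
  assumes "continuous_on (cbox a b) f" "x \<in> cbox a b"
  shows "continuous_on {a$i..b$i} (fsec f x i)"
  using continuous_on_coord_sec[OF assms(1) _ assms(2), of "axis i 1"]
  by (simp add: Basis_vec_axis inner_axis coord_sec_axis)

lemma upper_box_dim_section_le:
  fixes a b :: "real^'n" and f :: "real^'n \<Rightarrow> real" and H :: "'n \<Rightarrow> real"
  assumes ab: "a$i \<le> b$i" and cont: "continuous_on (cbox a b) f" and H: "H i \<le> 1"
    and osc: "osc_hyp a b f H" and x: "x \<in> cbox a b"
  shows "upper_box_dim (graph1 (a$i) (b$i) (fsec f x i)) \<le> ereal (2 - H i)"
proof -
  obtain c where c: "\<And>i. 0 < c i" and osc_bound: "\<forall>\<^sub>F \<delta> in at_right 0. \<forall>i. \<forall>x\<in>cbox a b. \<forall>t\<in>{a$i..b$i}.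
      osc (a$i) (b$i) \<delta> t (fsec f x i) \<le> c i * \<delta> powr H i"
    using osc_hyp_eventually[OF osc] by blast
  show ?thesis
    using osc_bound x c[of i] ab H
    by (intro upper_box_dim_graph1_le[where c = "c i"] continuous_on_fsec[OF cont x])
      (auto elim!: eventually_mono simp: less_imp_le)
qed

lemma has_box_dim_section:
  fixes a b :: "real^'n" and f :: "real^'n \<Rightarrow> real" and H :: "'n \<Rightarrow> real"
  assumes ab: "\<And>i. a$i < b$i" and cont: "continuous_on (cbox a b) f" and H: "H i \<le> 1"
    and osc: "osc_hyp a b f H" and var: "var_hyp a b f H"
  obtains x where "x \<in> cbox a b" "has_box_dim (graph1 (a$i) (b$i) (fsec f x i)) (2 - H i)"
proof -
  obtain c A where c: "\<And>i. 0 < c i" and A: "\<And>i. A i \<subseteq> {x \<in> cbox a b. x$i = a$i}"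
    and dense: "\<And>i. {x \<in> cbox a b. x$i = a$i} \<subseteq> closure (A i)"
    and var_bound: "\<And>i. \<forall>\<^sub>F \<delta> in at_right 0. \<forall>x\<in>A i. c i * \<delta> powr H i \<le> Var (a$i) (b$i) \<delta> (fsec f x i)"
    using var_hyp_eventually[OF var] by blast
  have "a \<in> {x \<in> cbox a b. x$i = a$i}"
    using ab by (auto simp: mem_box Basis_vec_axis inner_axis less_imp_le)
  then have "A i \<noteq> {}"
    using dense[of i] by auto
  then obtain x where x: "x \<in> A i"
    by blast
  then have x_box: "x \<in> cbox a b"
    using A[of i] by blast
  have "has_box_dim (graph1 (a$i) (b$i) (fsec f x i)) (2 - H i)"
  proof (rule has_box_dim_if_bounds)
    show "upper_box_dim (graph1 (a$i) (b$i) (fsec f x i)) \<le> ereal (2 - H i)"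
      using ab[of i] by (intro upper_box_dim_section_le cont H osc x_box) (simp add: less_imp_le)
    show "ereal (2 - H i) \<le> lower_box_dim (graph1 (a$i) (b$i) (fsec f x i))"
      using var_bound[of i] x c[of i] ab[of i]
      by (intro lower_box_dim_graph1_ge[where c = "c i"] continuous_on_fsec[OF cont x_box])
        (auto elim!: eventually_mono)
  qed
  with x_box that show ?thesis
    by blast
qed

lemma Sup_box_dim_sections:
  fixes a b :: "real^'n" and f :: "real^'n \<Rightarrow> real" and H :: "'n \<Rightarrow> real"
  assumes ab: "\<And>i. a$i < b$i" and cont: "continuous_on (cbox a b) f" and H: "\<And>i. H i \<le> 1"
    and osc: "osc_hyp a b f H" and var: "var_hyp a b f H"
  shows "Sup {d. \<exists>x\<in>cbox a b. has_box_dim (graph1 (a$i) (b$i) (fsec f x i)) d} = 2 - H i"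
proof (rule cSup_eq_maximum)
  show "2 - H i \<in> {d. \<exists>x\<in>cbox a b. has_box_dim (graph1 (a$i) (b$i) (fsec f x i)) d}"
    using has_box_dim_section[OF ab cont H osc var] by blast
  fix d assume "d \<in> {d. \<exists>x\<in>cbox a b. has_box_dim (graph1 (a$i) (b$i) (fsec f x i)) d}"
  then obtain x where x: "x \<in> cbox a b" and dim: "has_box_dim (graph1 (a$i) (b$i) (fsec f x i)) d"
    by blast
  from dim have "upper_box_dim (graph1 (a$i) (b$i) (fsec f x i)) = ereal d"
    by (rule upper_box_dim_eq_if_has_box_dim)
  moreover have "upper_box_dim (graph1 (a$i) (b$i) (fsec f x i)) \<le> ereal (2 - H i)"
    using ab[of i] by (intro upper_box_dim_section_le cont H osc x) (simp add: less_imp_le)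
  ultimately show "d \<le> 2 - H i"
    by simp
qed

lemma Max_range_diff:
  fixes g :: "'n::finite \<Rightarrow> real"
  shows "Max (range (\<lambda>i. c - g i)) = c - Min (range g)"
proof (rule Max_eqI)
  show "y \<le> c - Min (range g)" if "y \<in> range (\<lambda>i. c - g i)" for y
    using that Min_le[of "range g"] by auto
  have "Min (range g) \<in> range g"
    by (rule Min_in) auto
  then obtain i where "Min (range g) = g i"
    by blast
  then show "c - Min (range g) \<in> range (\<lambda>i. c - g i)"
    by simp
qed simp

theorem mainTheorem7:
  fixes a b :: "real^'n" and f :: "real^'n \<Rightarrow> real" and H :: "'n \<Rightarrow> real"
  assumes ab: "\<And>i. a$i < b$i"
    and cont: "continuous_on (cbox a b) f"
    and H: "\<And>i. 0 < H i \<and> H i \<le> 1"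
  defines "s \<equiv> (\<lambda>i. Sup {d. \<exists>x\<in>cbox a b. has_box_dim (graph1 (a$i) (b$i) (fsec f x i)) d})"
  shows "(osc_hyp a b f H \<longrightarrow>
            upper_box_dim (graphn (cbox a b) f) \<le> ereal (real CARD('n) + 1 - Min (range H)))
       \<and> (var_hyp a b f H \<longrightarrow>
            lower_box_dim (graphn (cbox a b) f) \<ge> ereal (real CARD('n) + 1 - Min (range H)))
       \<and> (osc_hyp a b f H \<and> var_hyp a b f H \<longrightarrow>
            has_box_dim (graphn (cbox a b) f) (real CARD('n) + 1 - Min (range H)) \<and>
            real CARD('n) + 1 - Min (range H) = real CARD('n) - 1 + Max (range s))"
proof -
  let ?D = "real CARD('n) + 1 - Min (range H)"
  have ab_le: "\<And>i. a$i \<le> b$i" and H_le: "\<And>i. H i \<le> 1"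
    using ab H less_imp_le by blast+
  have upper: "upper_box_dim (graphn (cbox a b) f) \<le> ereal ?D" if "osc_hyp a b f H"
    using upper_box_dim_graphn_le[OF ab_le cont H_le that] .
  have lower: "ereal ?D \<le> lower_box_dim (graphn (cbox a b) f)" if "var_hyp a b f H"
    using lower_box_dim_graphn_ge[OF ab cont that] .
  have "?D = real CARD('n) - 1 + Max (range s)" if "osc_hyp a b f H" "var_hyp a b f H"
  proof -
    have "s = (\<lambda>i. 2 - H i)"
      unfolding s_def using Sup_box_dim_sections[OF ab cont H_le that] by blast
    then show ?thesis
      by (simp add: Max_range_diff)
  qed
  then show ?thesis
    using upper lower has_box_dim_if_bounds by blast
qed

end
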